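(* In a qubit stabilizer subsystem code, let $U$ be a bare-CSP unitary supported on $\bigcup_{j=0}^{m}R_j$ for regions $R_0,\dots,R_m$ of physical qubits. If $R_0$ and each $R_j^+:=B(R_j,2^{j-1}s_U)$, $j=1,\dots,m$, are dressed-cleanable, then the logical unitary $U_L$ implemented by $U$ (i.e. $V^\dagger UV=U_L\otimes\mathrm{Id}_J$) belongs to $\mathcal{C}_m$.
   Context: Stabilizer subsystem code: stabilizer group (abelian subgroup of the Pauli group not containing $-\mathrm{Id}$) with code space its $+1$ eigenspace, isomorphic via an encoding isometry $V$ to an encoded space of encoded qubits (with a basis such that codespace-preserving physical Paulis implement encoded Paulis), divided into logical subsystem $\mathcal{H}_L$ and junk $\mathcal{H}_J$. $\Pi=VV^\dagger$. $A$ is CSP if $[A,\Pi]=0$; dressed-CSP if moreover $V^\dagger AV=A_L\otimes A_J$ (implements $A_L\otimes A_J$); bare-CSP if also $A_J=\mathrm{Id}_J$. Physical qubits are vertices of a graph with graph distance; $B(R,s)$ is the set of qubits within distance $s$ of $R$; supported on $R$ means of the form $A_R\otimes\mathrm{Id}_{R^c}$. Spread: $s_U=\min\{s\in[0,\infty]:$ for all regions $R$ and operators $X$ supported on $R$, $UXU^\dagger$ is supported on $B(R,s)\}$. $R$ is dressed-cleanable if for every Pauli $P_L$ on $\mathcal{H}_L$ there is a dressed-CSP operator supported on $R^c$ implementing $P_L\otimes P_J$ for some $P_J$. Clifford hierarchy on $\mathcal{H}_L$: $\mathcal{C}_0=\mathbb{C}\,\mathrm{Id}_L$, $\mathcal{C}_1=\{cP: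 c\in\mathbb{C}, P$ Pauli on $\mathcal{H}_L\}$, and $\mathcal{C}_k=\{U:\forall P\in\mathcal{C}_1,\ UPU^\dagger P^\dagger\in\mathcal{C}_{k-1}\}$ for $k\ge2$. *)

theory Defs
  imports "Jordan_Normal_Form.Schur_Decomposition" "HOL-Library.Extended_Nat"
begin

(* Physical qubits are 0..<n; a physical operator is a complex 2^n x 2^n matrix
   (Jordan_Normal_Form 'mat'); the computational basis index x < 2^n has
   value qbit x q on qubit q.
   Encoded qubits are 0..<k+g: qubits 0..<k form the logical subsystem H_L,
   qubits k..<k+g form the junk subsystem H_J; an encoded operator is a
   2^(k+g) x 2^(k+g) matrix and A_L (x) A_J is 'kron A_L A_J' (low bits = L). *)

definition qbit :: "nat \<Rightarrow> nat \<Rightarrow> bool" where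
  "qbit x q = odd (x div 2 ^ q)"

datatype pauli1 = PI | PX | PY | PZ

fun pauli1_entry :: "pauli1 \<Rightarrow> bool \<Rightarrow> bool \<Rightarrow> complex" where
  "pauli1_entry PI a b = (if a = b then 1 else 0)"
| "pauli1_entry PX a b = (if a \<noteq> b then 1 else 0)"
| "pauli1_entry PY a b = (if a \<noteq> b then (if a then \<i> else - \<i>) else 0)"
| "pauli1_entry PZ a b = (if a = b then (if a then -1 else 1) else 0)"

definition pauli_string :: "nat \<Rightarrow> (nat \<Rightarrow> pauli1) \<Rightarrow> complex mat" where
  "pauli_string n p = mat (2 ^ n) (2 ^ n)
     (\<lambda>(x, y). \<Prod>q<n. pauli1_entry (p q) (qbit x q) (qbit y q))"

definition pauli_group :: "nat \<Rightarrow> complex mat set" where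
  "pauli_group n = {c \<cdot>\<^sub>m pauli_string n p | c p. c \<in> {1, -1, \<i>, - \<i>}}"

text \<open>Kronecker product; the first factor acts on the low-order qubits.\<close>
definition kron :: "complex mat \<Rightarrow> complex mat \<Rightarrow> complex mat" where
  "kron A B = mat (dim_row A * dim_row B) (dim_col A * dim_col B)
     (\<lambda>(i, j). A $$ (i mod dim_row A, j mod dim_col A) * B $$ (i div dim_row A, j div dim_col A))"

definition stabilizer_group :: "nat \<Rightarrow> complex mat set \<Rightarrow> bool" where
  "stabilizer_group n S \<longleftrightarrow>
     S \<subseteq> pauli_group n \<and> 1\<^sub>m (2 ^ n) \<in> S \<and>
     (\<forall>a\<in>S. \<forall>b\<in>S. a * b \<in> S) \<and> (\<forall>a\<in>S. mat_adjoint a \<in> S) \<and>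
     (\<forall>a\<in>S. \<forall>b\<in>S. a * b = b * a) \<and> - 1\<^sub>m (2 ^ n) \<notin> S"

definition code_space :: "nat \<Rightarrow> complex mat set \<Rightarrow> complex vec set" where
  "code_space n S = {v \<in> carrier_vec (2 ^ n). \<forall>s\<in>S. s *\<^sub>v v = v}"

definition code_proj :: "complex mat \<Rightarrow> complex mat" where
  "code_proj V = V * mat_adjoint V"

definition stabilizer_subsystem_code ::
    "nat \<Rightarrow> nat \<Rightarrow> nat \<Rightarrow> complex mat set \<Rightarrow> complex mat \<Rightarrow> bool" where
  "stabilizer_subsystem_code n k g S V \<longleftrightarrow>
     stabilizer_group n S \<and>
     V \<in> carrier_mat (2 ^ n) (2 ^ (k + g)) \<and>
     mat_adjoint V * V = 1\<^sub>m (2 ^ (k + g)) \<and>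
     {V *\<^sub>v w | w. w \<in> carrier_vec (2 ^ (k + g))} = code_space n S \<and>
     (\<forall>P\<in>pauli_group n. P * code_proj V = code_proj V * P \<longrightarrow>
        (\<exists>PL\<in>pauli_group k. \<exists>PJ\<in>pauli_group g. mat_adjoint V * P * V = kron PL PJ))"

definition CSP :: "nat \<Rightarrow> complex mat \<Rightarrow> complex mat \<Rightarrow> bool" where
  "CSP n V A \<longleftrightarrow> A \<in> carrier_mat (2 ^ n) (2 ^ n) \<and> A * code_proj V = code_proj V * A"

definition implements ::
    "nat \<Rightarrow> nat \<Rightarrow> complex mat \<Rightarrow> complex mat \<Rightarrow> complex mat \<Rightarrow> complex mat \<Rightarrow> bool" where
  "implements k g V A AL AJ \<longleftrightarrow>
     AL \<in> carrier_mat (2 ^ k) (2 ^ k) \<and> AJ \<in> carrier_mat (2 ^ g) (2 ^ g) \<and>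
     mat_adjoint V * A * V = kron AL AJ"

definition dressed_CSP :: "nat \<Rightarrow> nat \<Rightarrow> nat \<Rightarrow> complex mat \<Rightarrow> complex mat \<Rightarrow> bool" where
  "dressed_CSP n k g V A \<longleftrightarrow> CSP n V A \<and> (\<exists>AL AJ. implements k g V A AL AJ)"

definition bare_CSP :: "nat \<Rightarrow> nat \<Rightarrow> nat \<Rightarrow> complex mat \<Rightarrow> complex mat \<Rightarrow> bool" where
  "bare_CSP n k g V A \<longleftrightarrow> CSP n V A \<and> (\<exists>AL. implements k g V A AL (1\<^sub>m (2 ^ g)))"

text \<open>A is supported on R: A = A_R (x) Id_(R^c).\<close>
definition supported_on :: "nat \<Rightarrow> nat set \<Rightarrow> complex mat \<Rightarrow> bool" where
  "supported_on n R A \<longleftrightarrow> A \<in> carrier_mat (2 ^ n) (2 ^ n) \<and>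
     (\<exists>f. \<forall>x<2 ^ n. \<forall>y<2 ^ n. A $$ (x, y) =
        (if (\<forall>q<n. q \<notin> R \<longrightarrow> qbit x q = qbit y q)
         then f (\<lambda>q. q \<in> R \<and> qbit x q) (\<lambda>q. q \<in> R \<and> qbit y q) else 0))"

text \<open>Graph distance on the vertex set 0..<n with edge relation E (infinite if disconnected).\<close>
definition gdist :: "nat \<Rightarrow> (nat \<Rightarrow> nat \<Rightarrow> bool) \<Rightarrow> nat \<Rightarrow> nat \<Rightarrow> enat" where
  "gdist n E a b = (INF l \<in> {l. (a, b) \<in> {(u, v). u < n \<and> v < n \<and> E u v} ^^ l}. enat l)"

definition qball :: "nat \<Rightarrow> (nat \<Rightarrow> nat \<Rightarrow> bool) \<Rightarrow> nat set \<Rightarrow> enat \<Rightarrow> nat set" where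
  "qball n E R s = {q. q < n \<and> (\<exists>r\<in>R. r < n \<and> gdist n E r q \<le> s)}"

definition spread :: "nat \<Rightarrow> (nat \<Rightarrow> nat \<Rightarrow> bool) \<Rightarrow> complex mat \<Rightarrow> enat" where
  "spread n E U = (LEAST s. \<forall>R X. supported_on n R X \<longrightarrow>
       supported_on n (qball n E R s) (U * X * mat_adjoint U))"

definition dressed_cleanable :: "nat \<Rightarrow> nat \<Rightarrow> nat \<Rightarrow> complex mat \<Rightarrow> nat set \<Rightarrow> bool" where
  "dressed_cleanable n k g V R \<longleftrightarrow>
     (\<forall>PL\<in>pauli_group k. \<exists>A PJ. PJ \<in> pauli_group g \<and>
        supported_on n ({..<n} - R) A \<and> dressed_CSP n k g V A \<and> implements k g V A PL PJ)"

fun clifford :: "nat \<Rightarrow> nat \<Rightarrow> complex mat set" where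
  "clifford k 0 = {c \<cdot>\<^sub>m 1\<^sub>m (2 ^ k) | c. True}"
| "clifford k (Suc 0) = {c \<cdot>\<^sub>m P | c P. P \<in> pauli_group k}"
| "clifford k (Suc (Suc j)) = {U \<in> carrier_mat (2 ^ k) (2 ^ k).
     \<forall>P\<in>clifford k (Suc 0). U * P * mat_adjoint U * mat_adjoint P \<in> clifford k (Suc j)}"

end

theory Submission
  imports Defs
begin

text \<open>For \<open>m = 0\<close>, \<open>U\<close> is supported on the cleanable region \<open>R\<^sub>0\<close>, so it
  commutes with representatives of all logical Paulis supported outside \<open>R\<^sub>0\<close>; hence \<open>U\<^sub>L\<close>
  commutes with every Pauli and is a scalar. For the step, with \<open>s\<close> a bound on the spread of \<open>U\<close>,
  cleaning \<open>B(R\<^sub>1, s)\<close> represents each logical Pauli \<open>P\<^sub>L\<close> by a Pauli string \<open>P\<close> supported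
  outside \<open>B(R\<^sub>1, s)\<close>. The group commutator \<open>K = U P U\<^sup>\<dagger> P\<close> is again a bare codespace-preserving
  unitary, implementing \<open>U\<^sub>L P\<^sub>L U\<^sub>L\<^sup>\<dagger> P\<^sub>L\<close>. Since \<open>U P U\<^sup>\<dagger>\<close> lives within distance \<open>s\<close> of the support
  of \<open>P\<close>, which avoids \<open>R\<^sub>1\<close>, \<open>K\<close> is supported on \<open>R\<^sub>0 \<union> R\<^sub>2 \<union> \<dots> \<union> R\<^sub>m\<close>, and its spread is
  at most \<open>2 s\<close>. These regions satisfy the hypotheses for \<open>m - 1\<close> with \<open>2 s\<close> in place of \<open>s\<close>, so all
  these commutators lie in \<open>\<C>\<^sub>m\<^sub>-\<^sub>1\<close> and \<open>U\<^sub>L \<in> \<C>\<^sub>m\<close>.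

  Supports are handled through their characterisation by commutation: an operator is supported on
  \<open>R\<close> iff it commutes with \<open>X\<^sub>q\<close> and \<open>Z\<^sub>q\<close> for every qubit \<open>q\<close> outside \<open>R\<close>.\<close>

section \<open>Adjoints and unitary matrices\<close>

lemma mat_adjoint_altdef:
  "mat_adjoint (A :: complex mat) = mat (dim_col A) (dim_row A) (\<lambda>(i, j). cnj (A $$ (j, i)))"
  unfolding mat_adjoint_def by (rule eq_matI) (auto simp: mat_of_rows_def)

lemma dim_mat_adjoint [simp]:
  "dim_row (mat_adjoint (A :: complex mat)) = dim_col A"
  "dim_col (mat_adjoint (A :: complex mat)) = dim_row A"
  by (simp_all add: mat_adjoint_altdef)

lemma index_mat_adjoint [simp]:
  "i < dim_col A \<Longrightarrow> j < dim_row A \<Longrightarrow> mat_adjoint (A :: complex mat) $$ (i, j) = cnj (A $$ (j, i))"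
  by (simp add: mat_adjoint_altdef)

lemma mat_adjoint_carrier [simp]:
  "A \<in> carrier_mat a b \<Longrightarrow> mat_adjoint (A :: complex mat) \<in> carrier_mat b a"
  by (metis dim_mat_adjoint carrier_matD carrier_matI)

lemma mat_adjoint_adjoint [simp]: "mat_adjoint (mat_adjoint (A :: complex mat)) = A"
  by (rule eq_matI) auto

lemma mat_adjoint_mult:
  "A \<in> carrier_mat a b \<Longrightarrow> B \<in> carrier_mat b c \<Longrightarrow>
    mat_adjoint ((A :: complex mat) * B) = mat_adjoint B * mat_adjoint A"
  by (intro eq_matI) (auto simp: scalar_prod_def sum_conjugate intro!: sum.cong)

lemma mat_adjoint_one [simp]: "mat_adjoint (1\<^sub>m n :: complex mat) = 1\<^sub>m n"
  by (rule eq_matI) auto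

lemma mat_adjoint_smult: "mat_adjoint (c \<cdot>\<^sub>m (A :: complex mat)) = cnj c \<cdot>\<^sub>m mat_adjoint A"
  by (rule eq_matI) auto

lemma smult_smult_mat: "a \<cdot>\<^sub>m (b \<cdot>\<^sub>m (A :: complex mat)) = (a * b) \<cdot>\<^sub>m A"
  by (rule eq_matI) auto

lemma one_smult_mat [simp]: "(1 :: complex) \<cdot>\<^sub>m A = A"
  by (rule eq_matI) auto

lemma mult_carrier_mat_square [simp]:
  "A \<in> carrier_mat N N \<Longrightarrow> B \<in> carrier_mat N N \<Longrightarrow> A * B \<in> carrier_mat N N"
  by (rule mult_carrier_mat)

lemma index_mult_mat_sum:
  "A \<in> carrier_mat a b \<Longrightarrow> B \<in> carrier_mat b c \<Longrightarrow> i < a \<Longrightarrow> j < c \<Longrightarrow>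
    (A * B) $$ (i, j) = (\<Sum>z<b. A $$ (i, z) * B $$ (z, j))"
  by (auto simp: scalar_prod_def atLeast0LessThan)

lemma mat_eq_if_mult_vec_eq:
  assumes "A \<in> carrier_mat a b" "B \<in> carrier_mat a b"
    and "\<And>w. w \<in> carrier_vec b \<Longrightarrow> A *\<^sub>v w = B *\<^sub>v w"
  shows "A = (B :: complex mat)"
proof (rule eq_matI)
  fix i j assume ij: "i < dim_row B" "j < dim_col B"
  have "(A *\<^sub>v unit_vec b j) $ i = (B *\<^sub>v unit_vec b j) $ i" using assms(3) by simp
  then show "A $$ (i, j) = B $$ (i, j)" using ij assms(1,2) by simp
qed (use assms in auto)

lemma nonzero_entry_if_right_invertible:
  assumes "A \<in> carrier_mat D D" "B \<in> carrier_mat D D" "A * B = 1\<^sub>m D" "0 < D"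
  shows "\<exists>i<D. \<exists>j<D. A $$ (i, j) \<noteq> (0 :: complex)"
proof (rule ccontr)
  assume "\<not> ?thesis"
  then have "(A * B) $$ (0, 0) = 0"
    using assms(4) by (simp add: index_mult_mat_sum[OF assms(1,2)])
  then show False using assms(3,4) by simp
qed

definition unitary_mat :: "nat \<Rightarrow> complex mat \<Rightarrow> bool" where
  "unitary_mat D U \<longleftrightarrow>
     U \<in> carrier_mat D D \<and> U * mat_adjoint U = 1\<^sub>m D \<and> mat_adjoint U * U = 1\<^sub>m D"

lemma unitary_matD:
  assumes "unitary_mat D U"
  shows "U \<in> carrier_mat D D" "mat_adjoint U \<in> carrier_mat D D"
    and "U * mat_adjoint U = 1\<^sub>m D" "mat_adjoint U * U = 1\<^sub>m D"
  using assms unfolding unitary_mat_def by auto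

lemma unitary_mat_adjoint: "unitary_mat D U \<Longrightarrow> unitary_mat D (mat_adjoint U)"
  unfolding unitary_mat_def by auto

lemma unitary_mat_cancel_left:
  assumes U: "unitary_mat D U" and W: "W \<in> carrier_mat D D'"
  shows "mat_adjoint U * (U * W) = W" and "U * (mat_adjoint U * W) = W"
proof -
  note u = unitary_matD[OF U]
  have "mat_adjoint U * (U * W) = (mat_adjoint U * U) * W"
    by (rule assoc_mult_mat[symmetric]) (use u W in auto)
  then show "mat_adjoint U * (U * W) = W" using u W by simp
  have "U * (mat_adjoint U * W) = (U * mat_adjoint U) * W"
    by (rule assoc_mult_mat[symmetric]) (use u W in auto)
  then show "U * (mat_adjoint U * W) = W" using u W by simp
qed

lemma unitary_mat_mult:
  assumes U: "unitary_mat D U" and W: "unitary_mat D W"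
  shows "unitary_mat D (U * W)"
proof -
  note u = unitary_matD[OF U] and w = unitary_matD[OF W]
  have "U * W * mat_adjoint (U * W) = U * (W * (mat_adjoint W * mat_adjoint U))"
    using u w by (simp add: mat_adjoint_mult[of _ D D _ D] assoc_mult_mat[of _ D D _ D _ D] mult_carrier_mat[of _ D D _ D])
  also have "\<dots> = 1\<^sub>m D" using u unitary_mat_cancel_left(2)[OF W, of "mat_adjoint U" D] by simp
  finally have 1: "U * W * mat_adjoint (U * W) = 1\<^sub>m D" .
  have "mat_adjoint (U * W) * (U * W) = mat_adjoint W * (mat_adjoint U * (U * W))"
    using u w by (simp add: mat_adjoint_mult[of _ D D _ D] assoc_mult_mat[of _ D D _ D _ D] mult_carrier_mat[of _ D D _ D])
  also have "\<dots> = 1\<^sub>m D" using w unitary_mat_cancel_left(1)[OF U, of W D] by simp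
  finally show ?thesis
    using 1 u w unfolding unitary_mat_def by simp
qed

section \<open>Computational basis indices\<close>

lemma qbit_iff_bit: "qbit x q \<longleftrightarrow> bit x q"
  by (simp add: qbit_def bit_iff_odd)

lemma qbit_ge_length: "(x :: nat) < 2 ^ n \<Longrightarrow> n \<le> q \<Longrightarrow> \<not> qbit x q"
proof -
  assume "x < 2 ^ n" "n \<le> q"
  then have "x < 2 ^ q" by (meson order_less_le_trans one_le_numeral power_increasing)
  then show ?thesis by (simp add: qbit_def)
qed

lemma less_power_if_high_qbits_zero: "(\<And>q. n \<le> q \<Longrightarrow> \<not> qbit x q) \<Longrightarrow> (x :: nat) < 2 ^ n"
proof -
  assume high: "\<And>q. n \<le> q \<Longrightarrow> \<not> qbit x q"
  have "take_bit n x = x"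
    by (rule bit_eqI) (metis bit_take_bit_iff high qbit_iff_bit not_less)
  then show ?thesis by (simp add: take_bit_nat_eq_self_iff)
qed

lemma qbit_eqI:
  "(x :: nat) < 2 ^ n \<Longrightarrow> y < 2 ^ n \<Longrightarrow> (\<And>q. q < n \<Longrightarrow> qbit x q = qbit y q) \<Longrightarrow> x = y"
  by (rule bit_eqI) (metis qbit_iff_bit qbit_ge_length not_less)

primrec index_of_qbits :: "nat \<Rightarrow> (nat \<Rightarrow> bool) \<Rightarrow> nat" where
  "index_of_qbits 0 a = 0"
| "index_of_qbits (Suc n) a = (if a n then set_bit n (index_of_qbits n a) else index_of_qbits n a)"

lemma qbit_index_of_qbits [simp]: "qbit (index_of_qbits n a) q \<longleftrightarrow> q < n \<and> a q"
  by (induction n) (auto simp: qbit_iff_bit bit_set_bit_iff less_Suc_eq)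

lemma index_of_qbits_less [simp]: "index_of_qbits n a < 2 ^ n"
  by (rule less_power_if_high_qbits_zero) simp

lemma qbit_flip_bit [simp]: "qbit (flip_bit q x) i \<longleftrightarrow> (if i = q then \<not> qbit x q else qbit x i)"
  by (auto simp: qbit_iff_bit bit_flip_bit_iff)

lemma flip_bit_flip_bit [simp]: "flip_bit q (flip_bit q (x :: nat)) = x"
  by (rule bit_eqI) (auto simp: bit_flip_bit_iff)

lemma flip_bit_less_power: "(x :: nat) < 2 ^ n \<Longrightarrow> q < n \<Longrightarrow> flip_bit q x < 2 ^ n"
  by (rule less_power_if_high_qbits_zero) (auto simp: qbit_ge_length)

lemma qbit_add_power:
  assumes "(z :: nat) < 2 ^ n" "q \<le> n"
  shows "qbit (z + 2 ^ n) q \<longleftrightarrow> q = n \<or> qbit z q"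
proof -
  have "\<not> bit z n" using assms qbit_ge_length qbit_iff_bit by auto
  then have "z + 2 ^ n = Bit_Operations.or z (2 ^ n)"
    by (intro disjunctive_add_eq_or bit_eqI) (auto simp: bit_exp_iff bit_and_iff)
  then show ?thesis using assms(2) by (auto simp: qbit_iff_bit bit_or_iff bit_exp_iff)
qed

lemma sum_prod_qbits:
  fixes F :: "nat \<Rightarrow> bool \<Rightarrow> 'a :: comm_semiring_1"
  shows "(\<Sum>z<2 ^ n. \<Prod>q<n. F q (qbit z q)) = (\<Prod>q<n. F q False + F q True)"
proof (induction n)
  case 0
  then show ?case by simp
next
  case (Suc n)
  let ?M = "(2 :: nat) ^ n" and ?f = "\<lambda>z. \<Prod>q<Suc n. F q (qbit z q)"
  have low: "(\<Sum>z<?M. ?f z) = (\<Sum>z<?M. \<Prod>q<n. F q (qbit z q)) * F n False"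
    by (auto simp: sum_distrib_right qbit_ge_length intro!: sum.cong)
  have "(\<Sum>z\<in>{?M..<?M + ?M}. ?f z) = (\<Sum>z<?M. ?f (z + ?M))"
    using sum.shift_bounds_nat_ivl[of ?f 0 ?M ?M] by (simp add: atLeast0LessThan)
  also have "\<dots> = (\<Sum>z<?M. \<Prod>q<n. F q (qbit z q)) * F n True"
    by (auto simp: sum_distrib_right qbit_add_power intro!: sum.cong prod.cong)
  finally have high: "(\<Sum>z\<in>{?M..<?M + ?M}. ?f z) = (\<Sum>z<?M. \<Prod>q<n. F q (qbit z q)) * F n True" .
  have split: "{..<2 ^ Suc n} = {..<?M} \<union> {?M..<?M + ?M}" by auto
  have "(\<Sum>z<2 ^ Suc n. ?f z) = (\<Sum>z<?M. ?f z) + (\<Sum>z\<in>{?M..<?M + ?M}. ?f z)"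
    unfolding split by (rule sum.union_disjoint) auto
  then show ?case using low high Suc by (simp add: distrib_left)
qed

lemma sum_sum_prod_qbits:
  fixes H :: "nat \<Rightarrow> bool \<Rightarrow> bool \<Rightarrow> 'a :: comm_semiring_1"
  shows "(\<Sum>x<2 ^ n. \<Sum>y<2 ^ n. \<Prod>q<n. H q (qbit x q) (qbit y q)) =
    (\<Prod>q<n. H q False False + H q False True + (H q True False + H q True True))"
  by (simp add: sum_prod_qbits[where F = "\<lambda>q b. H q (qbit _ q) b"]
      sum_prod_qbits[where F = "\<lambda>q b. H q b False + H q b True"])

lemma sum_mod_div:
  fixes f :: "nat \<Rightarrow> nat \<Rightarrow> 'a :: comm_monoid_add"
  shows "(\<Sum>z<a * b. f (z mod a) (z div a)) = (\<Sum>z2<b. \<Sum>z1<a. f z1 z2)"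
proof (induction b)
  case 0
  then show ?case by simp
next
  case (Suc b)
  have "(\<Sum>z\<in>{a * b..<a * b + a}. f (z mod a) (z div a)) = (\<Sum>z<a. f ((z + a * b) mod a) ((z + a * b) div a))"
    using sum.shift_bounds_nat_ivl[of "\<lambda>z. f (z mod a) (z div a)" 0 "a * b" a]
    by (simp add: add.commute atLeast0LessThan)
  also have "\<dots> = (\<Sum>z1<a. f z1 b)"
    by (auto intro!: sum.cong)
  finally have "(\<Sum>z\<in>{a * b..<a * b + a}. f (z mod a) (z div a)) = (\<Sum>z1<a. f z1 b)" .
  moreover have split: "{..<a * Suc b} = {..<a * b} \<union> {a * b..<a * b + a}" by auto
  ultimately show ?case unfolding split using Suc
    by (subst sum.union_disjoint) (auto simp: add.commute)
qed

lemma prod_if_one_zero: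
  "finite A \<Longrightarrow> (\<Prod>q\<in>A. (if P q then 1 else 0 :: 'a :: comm_semiring_1)) = (if \<forall>q\<in>A. P q then 1 else 0)"
  by (induction A rule: finite_induct) auto

lemma sum_eq_single_nonzero:
  "finite A \<Longrightarrow> a \<in> A \<Longrightarrow> (\<And>z. z \<in> A \<Longrightarrow> z \<noteq> a \<Longrightarrow> f z = 0) \<Longrightarrow> sum f A = f a"
  by (metis sum.remove sum.neutral add_0_right DiffE insertCI)

section \<open>Pauli strings\<close>

lemma cnj_pauli1_entry: "cnj (pauli1_entry s b a) = pauli1_entry s a b"
  by (cases s) auto

lemma pauli1_entry_square:
  "pauli1_entry s a False * pauli1_entry s False c + pauli1_entry s a True * pauli1_entry s True c =
    (if a = c then 1 else 0)"
  by (cases s; cases a; cases c) auto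

definition pauli1_sign :: "pauli1 \<Rightarrow> pauli1 \<Rightarrow> complex" where
  "pauli1_sign s t = (if s = PI \<or> t = PI \<or> s = t then 1 else -1)"

lemma pauli1_sign_square: "pauli1_sign s t * pauli1_sign s t = 1"
  by (auto simp: pauli1_sign_def)

lemma pauli1_entry_commute:
  "pauli1_entry s a False * pauli1_entry t False c + pauli1_entry s a True * pauli1_entry t True c =
    pauli1_sign s t *
      (pauli1_entry t a False * pauli1_entry s False c + pauli1_entry t a True * pauli1_entry s True c)"
  by (cases s; cases t; cases a; cases c) (auto simp: pauli1_sign_def)

lemma pauli1_entry_orthogonal:
  "cnj (pauli1_entry s False False) * pauli1_entry t False False +
   cnj (pauli1_entry s False True) * pauli1_entry t False True +
   (cnj (pauli1_entry s True False) * pauli1_entry t True False +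
    cnj (pauli1_entry s True True) * pauli1_entry t True True) = (if s = t then 2 else 0)"
  by (cases s; cases t) auto

lemma UNIV_pauli1: "(UNIV :: pauli1 set) = {PI, PX, PY, PZ}"
  using pauli1.exhaust by auto

lemma pauli1_entry_complete:
  "(\<Sum>s\<in>UNIV. cnj (pauli1_entry s b b') * pauli1_entry s a a') = (if b = a \<and> b' = a' then 2 else 0)"
  by (cases b; cases b'; cases a; cases a') (auto simp: UNIV_pauli1)

lemma pauli_string_carrier [simp]: "pauli_string n p \<in> carrier_mat (2 ^ n) (2 ^ n)"
  by (simp add: pauli_string_def)

lemma dim_pauli_string [simp]:
  "dim_row (pauli_string n p) = 2 ^ n" "dim_col (pauli_string n p) = 2 ^ n"
  by (simp_all add: pauli_string_def)

lemma index_pauli_string: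
  "x < 2 ^ n \<Longrightarrow> y < 2 ^ n \<Longrightarrow>
    pauli_string n p $$ (x, y) = (\<Prod>q<n. pauli1_entry (p q) (qbit x q) (qbit y q))"
  by (simp add: pauli_string_def)

lemma pauli_string_cong: "(\<And>q. q < n \<Longrightarrow> p q = p' q) \<Longrightarrow> pauli_string n p = pauli_string n p'"
  unfolding pauli_string_def by (intro cong_mat refl) (auto intro!: prod.cong)

lemma pauli_string_adjoint: "mat_adjoint (pauli_string n p) = pauli_string n p"
  by (rule eq_matI) (auto simp: index_pauli_string cnj_pauli1_entry)

lemma index_pauli_string_mult:
  assumes "x < 2 ^ n" "y < 2 ^ n"
  shows "(pauli_string n p * pauli_string n t) $$ (x, y) =
    (\<Prod>q<n. pauli1_entry (p q) (qbit x q) False * pauli1_entry (t q) False (qbit y q) +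
            pauli1_entry (p q) (qbit x q) True * pauli1_entry (t q) True (qbit y q))"
proof -
  have "(pauli_string n p * pauli_string n t) $$ (x, y) =
      (\<Sum>z<2 ^ n. pauli_string n p $$ (x, z) * pauli_string n t $$ (z, y))"
    using assms by (simp add: index_mult_mat_sum[of _ "2 ^ n" "2 ^ n" _ "2 ^ n"] del: index_mult_mat)
  also have "\<dots> = (\<Sum>z<2 ^ n. \<Prod>q<n. pauli1_entry (p q) (qbit x q) (qbit z q) * pauli1_entry (t q) (qbit z q) (qbit y q))"
    using assms by (auto simp: index_pauli_string prod.distrib intro!: sum.cong)
  also have "\<dots> = (\<Prod>q<n. pauli1_entry (p q) (qbit x q) False * pauli1_entry (t q) False (qbit y q) +
            pauli1_entry (p q) (qbit x q) True * pauli1_entry (t q) True (qbit y q))"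
    by (rule sum_prod_qbits[where F = "\<lambda>q b. pauli1_entry (p q) (qbit x q) b * pauli1_entry (t q) b (qbit y q)"])
  finally show ?thesis .
qed

lemma pauli_string_square: "pauli_string n p * pauli_string n p = 1\<^sub>m (2 ^ n)"
proof (rule eq_matI)
  fix x y assume "x < dim_row (1\<^sub>m (2 ^ n) :: complex mat)" "y < dim_col (1\<^sub>m (2 ^ n) :: complex mat)"
  then have xy: "x < 2 ^ n" "y < 2 ^ n" by auto
  have "(pauli_string n p * pauli_string n p) $$ (x, y) = (\<Prod>q<n. (if qbit x q = qbit y q then 1 else 0))"
    by (simp only: index_pauli_string_mult[OF xy] pauli1_entry_square)
  also have "\<dots> = (if x = y then 1 else 0)"
    using xy by (auto simp: prod_if_one_zero qbit_eqI)
  finally show "(pauli_string n p * pauli_string n p) $$ (x, y) = 1\<^sub>m (2 ^ n) $$ (x, y)"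
    using xy by simp
qed auto

lemma unitary_pauli_string: "unitary_mat (2 ^ n) (pauli_string n p)"
  by (simp add: unitary_mat_def pauli_string_adjoint pauli_string_square)

definition pauli_sign :: "nat \<Rightarrow> (nat \<Rightarrow> pauli1) \<Rightarrow> (nat \<Rightarrow> pauli1) \<Rightarrow> complex" where
  "pauli_sign n p t = (\<Prod>q<n. pauli1_sign (p q) (t q))"

lemma pauli_sign_square: "pauli_sign n p t * pauli_sign n p t = 1"
  unfolding pauli_sign_def by (simp add: prod.distrib[symmetric] pauli1_sign_square)

lemma pauli_string_commute:
  "pauli_string n p * pauli_string n t = pauli_sign n p t \<cdot>\<^sub>m (pauli_string n t * pauli_string n p)"
proof (rule eq_matI)
  fix x y
  assume "x < dim_row (pauli_sign n p t \<cdot>\<^sub>m (pauli_string n t * pauli_string n p))"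
    and "y < dim_col (pauli_sign n p t \<cdot>\<^sub>m (pauli_string n t * pauli_string n p))"
  then have xy: "x < 2 ^ n" "y < 2 ^ n" by auto
  have "(pauli_string n p * pauli_string n t) $$ (x, y) =
      (\<Prod>q<n. pauli1_sign (p q) (t q) *
        (pauli1_entry (t q) (qbit x q) False * pauli1_entry (p q) False (qbit y q) +
         pauli1_entry (t q) (qbit x q) True * pauli1_entry (p q) True (qbit y q)))"
    unfolding index_pauli_string_mult[OF xy] by (rule prod.cong[OF refl], rule pauli1_entry_commute)
  also have "\<dots> = pauli_sign n p t * (pauli_string n t * pauli_string n p) $$ (x, y)"
    by (simp only: index_pauli_string_mult[OF xy] pauli_sign_def prod.distrib)
  finally show "(pauli_string n p * pauli_string n t) $$ (x, y) =
      (pauli_sign n p t \<cdot>\<^sub>m (pauli_string n t * pauli_string n p)) $$ (x, y)"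
    using xy by simp
qed auto

lemma prod_split_off: "q < (n :: nat) \<Longrightarrow> (\<Prod>i<n. f i) = f q * (\<Prod>i\<in>{..<n} - {q}. f i)"
  by (rule prod.remove) auto

lemma pauli_sign_single:
  "q < n \<Longrightarrow> pauli_sign n p (\<lambda>i. if i = q then s else PI) = pauli1_sign (p q) s"
  unfolding pauli_sign_def
  by (subst prod_split_off[of q]) (auto simp: pauli1_sign_def intro!: prod.neutral)

definition pauli_Z :: "nat \<Rightarrow> nat \<Rightarrow> complex mat" where
  "pauli_Z n q = pauli_string n (\<lambda>i. if i = q then PZ else PI)"

definition pauli_X :: "nat \<Rightarrow> nat \<Rightarrow> complex mat" where
  "pauli_X n q = pauli_string n (\<lambda>i. if i = q then PX else PI)"

lemma pauli_ZX_carrier [simp]: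
  "pauli_Z n q \<in> carrier_mat (2 ^ n) (2 ^ n)" "pauli_X n q \<in> carrier_mat (2 ^ n) (2 ^ n)"
  by (simp_all add: pauli_Z_def pauli_X_def)

lemma pauli_ZX_adjoint [simp]:
  "mat_adjoint (pauli_Z n q) = pauli_Z n q" "mat_adjoint (pauli_X n q) = pauli_X n q"
  by (simp_all add: pauli_Z_def pauli_X_def pauli_string_adjoint)

lemma index_pauli_Z:
  assumes "x < 2 ^ n" "y < 2 ^ n" "q < n"
  shows "pauli_Z n q $$ (x, y) = (if x = y then (if qbit x q then -1 else 1) else 0)"
proof -
  have "pauli_Z n q $$ (x, y) = pauli1_entry PZ (qbit x q) (qbit y q) *
      (\<Prod>i\<in>{..<n} - {q}. (if qbit x i = qbit y i then 1 else 0))"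
    using assms unfolding pauli_Z_def by (simp add: index_pauli_string prod_split_off[OF assms(3)])
  then show ?thesis
    using assms by (auto simp: prod_if_one_zero intro: qbit_eqI)
qed

lemma index_pauli_X:
  assumes "x < 2 ^ n" "y < 2 ^ n" "q < n"
  shows "pauli_X n q $$ (x, y) = (if y = flip_bit q x then 1 else 0)"
proof -
  have "pauli_X n q $$ (x, y) = pauli1_entry PX (qbit x q) (qbit y q) *
      (\<Prod>i\<in>{..<n} - {q}. (if qbit x i = qbit y i then 1 else 0))"
    using assms unfolding pauli_X_def by (simp add: index_pauli_string prod_split_off[OF assms(3)])
  moreover have "y = flip_bit q x \<longleftrightarrow> qbit x q \<noteq> qbit y q \<and> (\<forall>i\<in>{..<n} - {q}. qbit x i = qbit y i)"
  proof
    assume "qbit x q \<noteq> qbit y q \<and> (\<forall>i\<in>{..<n} - {q}. qbit x i = qbit y i)"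
    then show "y = flip_bit q x"
      using assms by (intro qbit_eqI[of _ n]) (auto simp: flip_bit_less_power)
  qed auto
  ultimately show ?thesis by (auto simp: prod_if_one_zero)
qed

lemma index_mult_pauli_X:
  assumes "A \<in> carrier_mat (2 ^ n) (2 ^ n)" "x < 2 ^ n" "y < 2 ^ n" "q < n"
  shows "(A * pauli_X n q) $$ (x, y) = A $$ (x, flip_bit q y)"
proof -
  have "(A * pauli_X n q) $$ (x, y) = (\<Sum>z<2 ^ n. A $$ (x, z) * pauli_X n q $$ (z, y))"
    using assms by (simp add: index_mult_mat_sum[of _ "2 ^ n" "2 ^ n" _ "2 ^ n"])
  also have "\<dots> = A $$ (x, flip_bit q y) * pauli_X n q $$ (flip_bit q y, y)"
    by (rule sum_eq_single_nonzero) (use assms in \<open>auto simp: index_pauli_X flip_bit_less_power\<close>)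
  finally show ?thesis using assms by (simp add: index_pauli_X flip_bit_less_power)
qed

lemma index_pauli_X_mult:
  assumes "A \<in> carrier_mat (2 ^ n) (2 ^ n)" "x < 2 ^ n" "y < 2 ^ n" "q < n"
  shows "(pauli_X n q * A) $$ (x, y) = A $$ (flip_bit q x, y)"
proof -
  have "(pauli_X n q * A) $$ (x, y) = (\<Sum>z<2 ^ n. pauli_X n q $$ (x, z) * A $$ (z, y))"
    using assms by (simp add: index_mult_mat_sum[of _ "2 ^ n" "2 ^ n" _ "2 ^ n"])
  also have "\<dots> = pauli_X n q $$ (x, flip_bit q x) * A $$ (flip_bit q x, y)"
    by (rule sum_eq_single_nonzero) (use assms in \<open>auto simp: index_pauli_X flip_bit_less_power\<close>)
  finally show ?thesis using assms by (simp add: index_pauli_X flip_bit_less_power)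
qed

lemma index_mult_pauli_Z:
  assumes "A \<in> carrier_mat (2 ^ n) (2 ^ n)" "x < 2 ^ n" "y < 2 ^ n" "q < n"
  shows "(A * pauli_Z n q) $$ (x, y) = A $$ (x, y) * (if qbit y q then -1 else 1)"
proof -
  have "(A * pauli_Z n q) $$ (x, y) = (\<Sum>z<2 ^ n. A $$ (x, z) * pauli_Z n q $$ (z, y))"
    using assms by (simp add: index_mult_mat_sum[of _ "2 ^ n" "2 ^ n" _ "2 ^ n"])
  also have "\<dots> = A $$ (x, y) * pauli_Z n q $$ (y, y)"
    by (rule sum_eq_single_nonzero) (use assms in \<open>auto simp: index_pauli_Z\<close>)
  finally show ?thesis using assms by (simp add: index_pauli_Z)
qed

lemma index_pauli_Z_mult:
  assumes "A \<in> carrier_mat (2 ^ n) (2 ^ n)" "x < 2 ^ n" "y < 2 ^ n" "q < n"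
  shows "(pauli_Z n q * A) $$ (x, y) = (if qbit x q then -1 else 1) * A $$ (x, y)"
proof -
  have "(pauli_Z n q * A) $$ (x, y) = (\<Sum>z<2 ^ n. pauli_Z n q $$ (x, z) * A $$ (z, y))"
    using assms by (simp add: index_mult_mat_sum[of _ "2 ^ n" "2 ^ n" _ "2 ^ n"])
  also have "\<dots> = pauli_Z n q $$ (x, x) * A $$ (x, y)"
    by (rule sum_eq_single_nonzero) (use assms in \<open>auto simp: index_pauli_Z\<close>)
  finally show ?thesis using assms by (simp add: index_pauli_Z)
qed

lemma pauli_group_carrier: "P \<in> pauli_group n \<Longrightarrow> P \<in> carrier_mat (2 ^ n) (2 ^ n)"
  unfolding pauli_group_def by auto

lemma pauli_groupE:
  assumes "P \<in> pauli_group n"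
  obtains c p where "P = c \<cdot>\<^sub>m pauli_string n p" "c \<in> {1, -1, \<i>, -\<i>}"
  using assms unfolding pauli_group_def by auto

lemma pauli_string_in_group: "pauli_string n p \<in> pauli_group n"
  unfolding pauli_group_def by (rule CollectI, rule exI[of _ 1], rule exI[of _ p]) simp

lemma pauli_ZX_in_group: "pauli_Z n q \<in> pauli_group n" "pauli_X n q \<in> pauli_group n"
  unfolding pauli_Z_def pauli_X_def by (rule pauli_string_in_group)+

lemma pauli_string_nonzero_entry: "\<exists>i<2 ^ n. \<exists>j<2 ^ n. pauli_string n p $$ (i, j) \<noteq> 0"
  by (rule nonzero_entry_if_right_invertible[OF pauli_string_carrier pauli_string_carrier
        pauli_string_square]) simp

lemma pauli_group_nonzero_entry: "P \<in> pauli_group n \<Longrightarrow> \<exists>i<2 ^ n. \<exists>j<2 ^ n. P $$ (i, j) \<noteq> 0"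
proof -
  assume "P \<in> pauli_group n"
  then obtain c p where P: "P = c \<cdot>\<^sub>m pauli_string n p" "c \<in> {1, -1, \<i>, -\<i>}"
    by (rule pauli_groupE)
  obtain i j where "i < 2 ^ n" "j < 2 ^ n" "pauli_string n p $$ (i, j) \<noteq> 0"
    using pauli_string_nonzero_entry by blast
  then show ?thesis using P by (intro exI[of _ i] exI[of _ j]) auto
qed

section \<open>Support of an operator\<close>

definition agree_off :: "nat \<Rightarrow> nat set \<Rightarrow> nat \<Rightarrow> nat \<Rightarrow> bool" where
  "agree_off n R x y \<longleftrightarrow> (\<forall>q<n. q \<notin> R \<longrightarrow> qbit x q = qbit y q)"

definition agree_on :: "nat \<Rightarrow> nat set \<Rightarrow> nat \<Rightarrow> nat \<Rightarrow> bool" where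
  "agree_on n R x y \<longleftrightarrow> (\<forall>q<n. q \<in> R \<longrightarrow> qbit x q = qbit y q)"

lemma supported_on_carrier: "supported_on n R A \<Longrightarrow> A \<in> carrier_mat (2 ^ n) (2 ^ n)"
  unfolding supported_on_def by auto

lemma restrict_qbits_eq:
  "x < 2 ^ n \<Longrightarrow> x' < 2 ^ n \<Longrightarrow> agree_on n R x x' \<Longrightarrow>
    (\<lambda>q. q \<in> R \<and> qbit x q) = (\<lambda>q. q \<in> R \<and> qbit x' q)"
  by (rule ext) (metis not_less qbit_ge_length agree_on_def)

lemma supported_on_entry:
  assumes "supported_on n R A" "x < 2 ^ n" "y < 2 ^ n" "x' < 2 ^ n" "y' < 2 ^ n"
    and "agree_on n R x x'" "agree_on n R y y'" "agree_off n R x' y'"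
  shows "A $$ (x, y) = (if agree_off n R x y then A $$ (x', y') else 0)"
proof -
  obtain f where f: "\<forall>x<2 ^ n. \<forall>y<2 ^ n. A $$ (x, y) =
      (if agree_off n R x y then f (\<lambda>q. q \<in> R \<and> qbit x q) (\<lambda>q. q \<in> R \<and> qbit y q) else 0)"
    using assms(1) unfolding supported_on_def agree_off_def by blast
  show ?thesis
    using f[rule_format, of x y] f[rule_format, of x' y'] assms(2-8)
      restrict_qbits_eq[of x n x' R] restrict_qbits_eq[of y n y' R] by auto
qed

lemma supported_on_entry_zero:
  assumes "supported_on n R A" "x < 2 ^ n" "y < 2 ^ n" "\<not> agree_off n R x y"
  shows "A $$ (x, y) = 0"
proof -
  obtain f where f: "\<forall>x<2 ^ n. \<forall>y<2 ^ n. A $$ (x, y) =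
      (if agree_off n R x y then f (\<lambda>q. q \<in> R \<and> qbit x q) (\<lambda>q. q \<in> R \<and> qbit y q) else 0)"
    using assms(1) unfolding supported_on_def agree_off_def by blast
  then show ?thesis using assms(2-4) by simp
qed

lemma supported_onI:
  assumes "A \<in> carrier_mat (2 ^ n) (2 ^ n)"
    and "\<And>x y. x < 2 ^ n \<Longrightarrow> y < 2 ^ n \<Longrightarrow> \<not> agree_off n R x y \<Longrightarrow> A $$ (x, y) = 0"
    and "\<And>x y x' y'. x < 2 ^ n \<Longrightarrow> y < 2 ^ n \<Longrightarrow> x' < 2 ^ n \<Longrightarrow> y' < 2 ^ n \<Longrightarrow>
      agree_off n R x y \<Longrightarrow> agree_off n R x' y' \<Longrightarrow> agree_on n R x x' \<Longrightarrow> agree_on n R y y' \<Longrightarrow>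
      A $$ (x, y) = A $$ (x', y')"
  shows "supported_on n R A"
  unfolding supported_on_def
proof (intro conjI exI allI impI)
  fix x y :: nat assume xy: "x < 2 ^ n" "y < 2 ^ n"
  let ?f = "\<lambda>a b. A $$ (index_of_qbits n a, index_of_qbits n b)"
  show "A $$ (x, y) = (if \<forall>q<n. q \<notin> R \<longrightarrow> qbit x q = qbit y q
      then ?f (\<lambda>q. q \<in> R \<and> qbit x q) (\<lambda>q. q \<in> R \<and> qbit y q) else 0)"
  proof (cases "agree_off n R x y")
    case True
    have "A $$ (x, y) = ?f (\<lambda>q. q \<in> R \<and> qbit x q) (\<lambda>q. q \<in> R \<and> qbit y q)"
      by (rule assms(3)) (use xy True in \<open>auto simp: agree_off_def agree_on_def\<close>)
    then show ?thesis using True by (simp add: agree_off_def)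
  next
    case False
    then have nc: "\<not> (\<forall>q<n. q \<notin> R \<longrightarrow> qbit x q = qbit y q)" by (simp add: agree_off_def)
    show ?thesis unfolding if_not_P[OF nc] using assms(2)[OF xy False] .
  qed
qed (fact assms(1))

text \<open>Operators with disjoint supports commute: in either product only one intermediate basis
  index contributes, namely the one taking the bits of \<open>x\<close> on the support of the right factor and
  those of \<open>y\<close> elsewhere.\<close>

definition splice_qbits :: "nat \<Rightarrow> nat set \<Rightarrow> nat \<Rightarrow> nat \<Rightarrow> nat" where
  "splice_qbits n T x y = index_of_qbits n (\<lambda>q. if q \<in> T then qbit x q else qbit y q)"

lemma index_mult_supported_disjoint:
  assumes X: "supported_on n R X" and Y: "supported_on n T Y" and RT: "R \<inter> T = {}"
    and xy: "x < 2 ^ n" "y < 2 ^ n"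
  shows "(X * Y) $$ (x, y) = X $$ (x, splice_qbits n T x y) * Y $$ (splice_qbits n T x y, y)"
proof -
  let ?z = "splice_qbits n T x y"
  have "(X * Y) $$ (x, y) = (\<Sum>z<2 ^ n. X $$ (x, z) * Y $$ (z, y))"
    using index_mult_mat_sum[OF supported_on_carrier[OF X] supported_on_carrier[OF Y] xy] .
  also have "\<dots> = X $$ (x, ?z) * Y $$ (?z, y)"
  proof (rule sum_eq_single_nonzero)
    fix z assume z: "z \<in> {..<2 ^ n}" "z \<noteq> ?z"
    show "X $$ (x, z) * Y $$ (z, y) = 0"
    proof (rule ccontr)
      assume "X $$ (x, z) * Y $$ (z, y) \<noteq> 0"
      then have "agree_off n R x z" "agree_off n T z y"
        using supported_on_entry_zero[OF X] supported_on_entry_zero[OF Y] xy z by force+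
      then have "z = ?z" unfolding splice_qbits_def using RT z xy
        by (intro qbit_eqI[of _ n]) (auto simp: agree_off_def)
      with z show False by simp
    qed
  qed (auto simp: splice_qbits_def)
  finally show ?thesis .
qed

lemma supported_on_disjoint_commute:
  assumes X: "supported_on n R X" and Y: "supported_on n T Y" and RT: "R \<inter> T = {}"
  shows "X * Y = Y * X"
proof (rule eq_matI)
  fix x y assume "x < dim_row (Y * X)" "y < dim_col (Y * X)"
  then have xy: "x < 2 ^ n" "y < 2 ^ n" using supported_on_carrier[OF Y] supported_on_carrier[OF X] by auto
  define z where "z = splice_qbits n T x y"
  define w where "w = splice_qbits n R x y"
  have zw: "z < 2 ^ n" "w < 2 ^ n" unfolding z_def w_def splice_qbits_def by auto
  have XY: "(X * Y) $$ (x, y) = X $$ (x, z) * Y $$ (z, y)"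
    unfolding z_def by (rule index_mult_supported_disjoint[OF X Y RT xy])
  have YX: "(Y * X) $$ (x, y) = Y $$ (x, w) * X $$ (w, y)"
    unfolding w_def by (rule index_mult_supported_disjoint[OF Y X _ xy]) (use RT in auto)
  show "(X * Y) $$ (x, y) = (Y * X) $$ (x, y)"
  proof (cases "agree_off n (R \<union> T) x y")
    case True
    have "X $$ (x, z) = (if agree_off n R x z then X $$ (w, y) else 0)"
      by (rule supported_on_entry[OF X xy(1) zw(1) zw(2) xy(2)])
        (use RT in \<open>auto simp: agree_on_def agree_off_def z_def w_def splice_qbits_def\<close>)
    moreover have "Y $$ (z, y) = (if agree_off n T z y then Y $$ (x, w) else 0)"
      by (rule supported_on_entry[OF Y zw(1) xy(2) xy(1) zw(2)])
        (use RT True in \<open>auto simp: agree_on_def agree_off_def z_def w_def splice_qbits_def\<close>)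
    moreover have "agree_off n R x z" "agree_off n T z y"
      using True RT by (auto simp: agree_off_def z_def splice_qbits_def)
    ultimately show ?thesis using XY YX by simp
  next
    case False
    then obtain q where "q < n" "q \<notin> R" "q \<notin> T" "qbit x q \<noteq> qbit y q"
      by (auto simp: agree_off_def)
    then have "\<not> agree_off n R x z" "\<not> agree_off n T x w"
      by (auto simp: agree_off_def z_def w_def splice_qbits_def)
    then show ?thesis
      using XY YX supported_on_entry_zero[OF X xy(1) zw(1)] supported_on_entry_zero[OF Y xy(1) zw(2)] by simp
  qed
qed (use supported_on_carrier[OF X] supported_on_carrier[OF Y] in auto)

lemma supported_on_pauli_string:
  assumes "\<And>q. q < n \<Longrightarrow> q \<notin> C \<Longrightarrow> p q = PI"
  shows "supported_on n C (pauli_string n p)"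
proof (rule supported_onI)
  fix x y assume xy: "x < 2 ^ n" "y < 2 ^ n" "\<not> agree_off n C x y"
  then obtain q where q: "q < n" "q \<notin> C" "qbit x q \<noteq> qbit y q" by (auto simp: agree_off_def)
  then have "pauli1_entry (p q) (qbit x q) (qbit y q) = 0" using assms by simp
  then show "pauli_string n p $$ (x, y) = 0"
    unfolding index_pauli_string[OF xy(1,2)] using q by (intro prod_zero bexI[of _ q]) auto
next
  fix x y x' y'
  assume h: "x < 2 ^ n" "y < 2 ^ n" "x' < 2 ^ n" "y' < 2 ^ n" "agree_off n C x y"
    "agree_off n C x' y'" "agree_on n C x x'" "agree_on n C y y'"
  show "pauli_string n p $$ (x, y) = pauli_string n p $$ (x', y')"
    unfolding index_pauli_string[OF h(1,2)] index_pauli_string[OF h(3,4)]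
  proof (rule prod.cong[OF refl])
    fix q assume "q \<in> {..<n}"
    then show "pauli1_entry (p q) (qbit x q) (qbit y q) = pauli1_entry (p q) (qbit x' q) (qbit y' q)"
      using h assms[of q] by (cases "q \<in> C") (auto simp: agree_off_def agree_on_def)
  qed
qed simp

definition commutes_with_qubit :: "nat \<Rightarrow> nat \<Rightarrow> complex mat \<Rightarrow> bool" where
  "commutes_with_qubit n q A \<longleftrightarrow>
     A * pauli_Z n q = pauli_Z n q * A \<and> A * pauli_X n q = pauli_X n q * A"

lemma supported_on_commutes_with_qubit:
  assumes "supported_on n R A" "q \<notin> R"
  shows "commutes_with_qubit n q A"
proof -
  have "supported_on n {q} (pauli_Z n q)" "supported_on n {q} (pauli_X n q)"
    unfolding pauli_Z_def pauli_X_def by (auto intro!: supported_on_pauli_string split: if_splits)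
  then show ?thesis
    using supported_on_disjoint_commute[OF assms(1)] assms(2) unfolding commutes_with_qubit_def by blast
qed

definition clear_qbits :: "nat \<Rightarrow> nat set \<Rightarrow> nat \<Rightarrow> nat" where
  "clear_qbits n T x = index_of_qbits n (\<lambda>q. q \<notin> T \<and> qbit x q)"

lemma clear_qbits_less [simp]: "clear_qbits n T x < 2 ^ n"
  by (simp add: clear_qbits_def)

lemma entry_eq_clear_qbits:
  assumes "finite T" "T \<subseteq> {..<n}"
    and flip: "\<And>x y q. x < 2 ^ n \<Longrightarrow> y < 2 ^ n \<Longrightarrow> q \<in> T \<Longrightarrow>
      Y $$ (x, y) = Y $$ (flip_bit q x, flip_bit q y)"
  shows "x < 2 ^ n \<Longrightarrow> y < 2 ^ n \<Longrightarrow> \<forall>q\<in>T. qbit x q = qbit y q \<Longrightarrow>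
    Y $$ (x, y) = Y $$ (clear_qbits n T x, clear_qbits n T y)"
  using assms(1,2) flip
proof (induction T arbitrary: x y rule: finite_induct)
  case empty
  have "clear_qbits n {} x = x" "clear_qbits n {} y = y"
    unfolding clear_qbits_def using empty.prems by (auto intro!: qbit_eqI[of _ n])
  then show ?case by simp
next
  case (insert q T)
  let ?x = "clear_qbits n T x" and ?y = "clear_qbits n T y"
  let ?x' = "clear_qbits n (insert q T) x" and ?y' = "clear_qbits n (insert q T) y"
  have IH: "Y $$ (x, y) = Y $$ (?x, ?y)" using insert by auto
  have xy: "?x < 2 ^ n" "?y < 2 ^ n" and q: "q < n" using insert.prems(4) by auto
  have same: "qbit ?x q = qbit ?y q" using insert by (auto simp: clear_qbits_def)
  show ?case
  proof (cases "qbit ?x q")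
    case True
    have "qbit (flip_bit q ?x) i = qbit ?x' i" "qbit (flip_bit q ?y) i = qbit ?y' i" if "i < n" for i
      using True same q insert(2) that by (auto simp: clear_qbits_def)
    then have "flip_bit q ?x = ?x'" "flip_bit q ?y = ?y'"
      using xy q by (auto intro!: qbit_eqI[of _ n] flip_bit_less_power)
    moreover have "Y $$ (?x, ?y) = Y $$ (flip_bit q ?x, flip_bit q ?y)"
      by (rule insert.prems(5)[OF xy]) simp
    ultimately show ?thesis using IH by simp
  next
    case False
    have "qbit ?x i = qbit ?x' i" "qbit ?y i = qbit ?y' i" if "i < n" for i
      using False same q insert(2) that by (auto simp: clear_qbits_def)
    then have "?x = ?x'" "?y = ?y'"
      by (auto intro!: qbit_eqI[of _ n])
    then show ?thesis using IH by simp
  qed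
qed

text \<open>Conversely, commuting with \<open>Z\<close> on a qubit forces the matrix to be diagonal in that qubit,
  and commuting with \<open>X\<close> makes the entries invariant under flipping it in both indices; clearing
  all qubits outside \<open>R\<close> then shows that the entries only depend on the qubits in \<open>R\<close>.\<close>

lemma supported_on_if_commutes_with_qubits:
  assumes cY: "Y \<in> carrier_mat (2 ^ n) (2 ^ n)"
    and com: "\<And>q. q < n \<Longrightarrow> q \<notin> R \<Longrightarrow> commutes_with_qubit n q Y"
  shows "supported_on n R Y"
proof -
  let ?T = "{..<n} - R"
  have diag: "Y $$ (x, y) = 0"
    if "x < 2 ^ n" "y < 2 ^ n" "q < n" "q \<notin> R" "qbit x q \<noteq> qbit y q" for x y q
  proof -
    have "(Y * pauli_Z n q) $$ (x, y) = (pauli_Z n q * Y) $$ (x, y)"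
      using com that unfolding commutes_with_qubit_def by simp
    then have "Y $$ (x, y) * (if qbit y q then -1 else 1) = (if qbit x q then -1 else 1) * Y $$ (x, y)"
      using that cY by (simp add: index_mult_pauli_Z index_pauli_Z_mult)
    then show ?thesis using that(5) by (cases "qbit x q") auto
  qed
  have flip: "Y $$ (x, y) = Y $$ (flip_bit q x, flip_bit q y)"
    if "x < 2 ^ n" "y < 2 ^ n" "q \<in> ?T" for x y q
  proof -
    have "(Y * pauli_X n q) $$ (x, flip_bit q y) = (pauli_X n q * Y) $$ (x, flip_bit q y)"
      using com that unfolding commutes_with_qubit_def by simp
    then show ?thesis using that cY by (simp add: index_mult_pauli_X index_pauli_X_mult flip_bit_less_power)
  qed
  have clear: "Y $$ (x, y) = Y $$ (clear_qbits n ?T x, clear_qbits n ?T y)"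
    if "x < 2 ^ n" "y < 2 ^ n" "agree_off n R x y" for x y
    using entry_eq_clear_qbits[of ?T n Y x y] flip that by (auto simp: agree_off_def)
  have clear_eq: "clear_qbits n ?T x = clear_qbits n ?T x'" if "agree_on n R x x'" for x x'
    using that unfolding clear_qbits_def agree_on_def by (intro qbit_eqI[of _ n]) auto
  show ?thesis
  proof (rule supported_onI[OF cY])
    fix x y assume "x < 2 ^ n" "y < 2 ^ n" "\<not> agree_off n R x y"
    then show "Y $$ (x, y) = 0" using diag by (auto simp: agree_off_def)
  next
    fix x y x' y'
    assume "x < 2 ^ n" "y < 2 ^ n" "x' < 2 ^ n" "y' < 2 ^ n" "agree_off n R x y"
      "agree_off n R x' y'" "agree_on n R x x'" "agree_on n R y y'"
    then show "Y $$ (x, y) = Y $$ (x', y')"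
      using clear[of x y] clear[of x' y'] clear_eq[of x x'] clear_eq[of y y'] by simp
  qed
qed

lemma supported_on_iff_commutes:
  "supported_on n R A \<longleftrightarrow>
    A \<in> carrier_mat (2 ^ n) (2 ^ n) \<and> (\<forall>q<n. q \<notin> R \<longrightarrow> commutes_with_qubit n q A)"
  using supported_on_carrier supported_on_commutes_with_qubit supported_on_if_commutes_with_qubits
  by metis

lemma commute_mult:
  fixes A B Z :: "complex mat"
  assumes c: "A \<in> carrier_mat N N" "B \<in> carrier_mat N N" "Z \<in> carrier_mat N N"
    and AZ: "A * Z = Z * A" and BZ: "B * Z = Z * B"
  shows "A * B * Z = Z * (A * B)"
proof -
  have "A * B * Z = A * (B * Z)" using c by (rule assoc_mult_mat)
  also have "\<dots> = A * (Z * B)" by (simp add: BZ)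
  also have "\<dots> = (A * Z) * B" using c by (intro assoc_mult_mat[symmetric])
  also have "\<dots> = (Z * A) * B" by (simp add: AZ)
  also have "\<dots> = Z * (A * B)" using c by (intro assoc_mult_mat)
  finally show ?thesis .
qed

lemma adjoint_commute:
  fixes A Z :: "complex mat"
  assumes "A \<in> carrier_mat N N" "Z \<in> carrier_mat N N" "mat_adjoint Z = Z" "A * Z = Z * A"
  shows "mat_adjoint A * Z = Z * mat_adjoint A"
  using assms mat_adjoint_mult[of A N N Z N] mat_adjoint_mult[of Z N N A N] by simp

lemma commutes_with_qubit_mult:
  assumes "A \<in> carrier_mat (2 ^ n) (2 ^ n)" "B \<in> carrier_mat (2 ^ n) (2 ^ n)"
    and "commutes_with_qubit n q A" "commutes_with_qubit n q B"
  shows "commutes_with_qubit n q (A * B)"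
  using assms commute_mult[OF assms(1,2) pauli_ZX_carrier(1)] commute_mult[OF assms(1,2) pauli_ZX_carrier(2)]
  unfolding commutes_with_qubit_def by simp

lemma commutes_with_qubit_adjoint:
  assumes "A \<in> carrier_mat (2 ^ n) (2 ^ n)" "commutes_with_qubit n q A"
  shows "commutes_with_qubit n q (mat_adjoint A)"
  using assms adjoint_commute[OF assms(1) pauli_ZX_carrier(1)] adjoint_commute[OF assms(1) pauli_ZX_carrier(2)]
  unfolding commutes_with_qubit_def by simp

lemma commutes_with_qubit_smult:
  assumes "A \<in> carrier_mat (2 ^ n) (2 ^ n)" "commutes_with_qubit n q A"
  shows "commutes_with_qubit n q (c \<cdot>\<^sub>m A)"
  using assms unfolding commutes_with_qubit_def
  by (simp add: mult_smult_assoc_mat[OF assms(1) pauli_ZX_carrier(1)] mult_smult_assoc_mat[OF assms(1) pauli_ZX_carrier(2)]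
      mult_smult_distrib[OF pauli_ZX_carrier(1) assms(1)] mult_smult_distrib[OF pauli_ZX_carrier(2) assms(1)])

lemma commutes_with_qubit_one: "commutes_with_qubit n q (1\<^sub>m (2 ^ n))"
  unfolding commutes_with_qubit_def
  by (simp add: left_mult_one_mat[OF pauli_ZX_carrier(1)] right_mult_one_mat[OF pauli_ZX_carrier(1)]
      left_mult_one_mat[OF pauli_ZX_carrier(2)] right_mult_one_mat[OF pauli_ZX_carrier(2)])

lemma sandwich_commute:
  fixes P A Z :: "complex mat"
  assumes c: "P \<in> carrier_mat N N" "A \<in> carrier_mat N N" "Z \<in> carrier_mat N N"
    and AZ: "A * Z = Z * A" and PZ: "P * Z = s \<cdot>\<^sub>m (Z * P)" and s: "s * s = 1"
  shows "P * A * P * Z = Z * (P * A * P)"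
proof -
  note assoc = assoc_mult_mat[of _ N N _ N _ N]
  have cc: "Z * P \<in> carrier_mat N N" "A * (Z * P) \<in> carrier_mat N N" "A * P \<in> carrier_mat N N"
    using c by auto
  have "P * A * P * Z = P * (A * (P * Z))" using c by (simp add: assoc)
  also have "\<dots> = s \<cdot>\<^sub>m (P * (A * (Z * P)))" unfolding PZ
    by (simp add: mult_smult_distrib[OF c(2) cc(1)] mult_smult_distrib[OF c(1) cc(2)])
  also have "P * (A * (Z * P)) = P * ((A * Z) * P)" using c by (simp add: assoc)
  also have "\<dots> = (P * Z) * (A * P)" using c by (simp add: AZ assoc)
  also have "\<dots> = s \<cdot>\<^sub>m ((Z * P) * (A * P))" unfolding PZ by (rule mult_smult_assoc_mat[OF cc(1) cc(3)])
  finally show ?thesis using s c by (simp add: smult_smult_mat assoc)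
qed

lemma commutes_with_qubit_pauli_sandwich:
  assumes A: "A \<in> carrier_mat (2 ^ n) (2 ^ n)" and com: "commutes_with_qubit n q A"
  shows "commutes_with_qubit n q (pauli_string n p * A * pauli_string n p)"
proof -
  let ?P = "pauli_string n p"
  have "?P * pauli_Z n q = pauli_sign n p (\<lambda>i. if i = q then PZ else PI) \<cdot>\<^sub>m (pauli_Z n q * ?P)"
    "?P * pauli_X n q = pauli_sign n p (\<lambda>i. if i = q then PX else PI) \<cdot>\<^sub>m (pauli_X n q * ?P)"
    unfolding pauli_Z_def pauli_X_def by (rule pauli_string_commute)+
  then have "?P * A * ?P * pauli_Z n q = pauli_Z n q * (?P * A * ?P)"
    "?P * A * ?P * pauli_X n q = pauli_X n q * (?P * A * ?P)"
    using com unfolding commutes_with_qubit_def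
    by (auto intro!: sandwich_commute[OF pauli_string_carrier A] pauli_sign_square)
  then show ?thesis unfolding commutes_with_qubit_def by blast
qed

lemma supported_on_weaken:
  "supported_on n T A \<Longrightarrow> (\<And>q. q < n \<Longrightarrow> q \<notin> R \<Longrightarrow> q \<notin> T) \<Longrightarrow> supported_on n R A"
  unfolding supported_on_iff_commutes by blast

lemma supported_on_mono: "supported_on n R A \<Longrightarrow> R \<subseteq> R' \<Longrightarrow> supported_on n R' A"
  by (erule supported_on_weaken) auto

lemma supported_on_restrict: "supported_on n R A \<Longrightarrow> supported_on n (R \<inter> {..<n}) A"
  by (erule supported_on_weaken) auto

lemma supported_on_all: "A \<in> carrier_mat (2 ^ n) (2 ^ n) \<Longrightarrow> supported_on n {..<n} A"
  unfolding supported_on_iff_commutes by blast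

lemma supported_on_Int: "supported_on n R A \<Longrightarrow> supported_on n T A \<Longrightarrow> supported_on n (R \<inter> T) A"
  unfolding supported_on_iff_commutes by blast

lemma supported_on_mult: "supported_on n R A \<Longrightarrow> supported_on n R B \<Longrightarrow> supported_on n R (A * B)"
  unfolding supported_on_iff_commutes by (auto intro: commutes_with_qubit_mult)

lemma supported_on_adjoint: "supported_on n R A \<Longrightarrow> supported_on n R (mat_adjoint A)"
  unfolding supported_on_iff_commutes by (auto intro: commutes_with_qubit_adjoint)

lemma supported_on_smult: "supported_on n R A \<Longrightarrow> supported_on n R (c \<cdot>\<^sub>m A)"
  unfolding supported_on_iff_commutes by (auto intro: commutes_with_qubit_smult)

lemma supported_on_one: "supported_on n R (1\<^sub>m (2 ^ n))"
  unfolding supported_on_iff_commutes by (auto intro: commutes_with_qubit_one)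

lemma supported_on_pauli_sandwich:
  "supported_on n R A \<Longrightarrow> supported_on n R (pauli_string n p * A * pauli_string n p)"
  unfolding supported_on_iff_commutes by (auto intro: commutes_with_qubit_pauli_sandwich)

lemma supported_on_empty_scalar:
  assumes "supported_on n {} A"
  shows "A = A $$ (0, 0) \<cdot>\<^sub>m 1\<^sub>m (2 ^ n)"
proof (rule eq_matI)
  fix x y assume "x < dim_row (A $$ (0, 0) \<cdot>\<^sub>m 1\<^sub>m (2 ^ n))" "y < dim_col (A $$ (0, 0) \<cdot>\<^sub>m 1\<^sub>m (2 ^ n))"
  then have xy: "x < 2 ^ n" "y < 2 ^ n" by auto
  have "A $$ (x, y) = (if agree_off n {} x y then A $$ (0, 0) else 0)"
    by (rule supported_on_entry[OF assms xy]) (auto simp: agree_on_def agree_off_def)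
  moreover have "agree_off n {} x y \<longleftrightarrow> x = y" using xy by (auto simp: agree_off_def intro: qbit_eqI)
  ultimately show "A $$ (x, y) = (A $$ (0, 0) \<cdot>\<^sub>m 1\<^sub>m (2 ^ n)) $$ (x, y)" using xy by simp
qed (use assms supported_on_carrier in auto)

section \<open>Graph balls and spread\<close>

definition graph_rel :: "nat \<Rightarrow> (nat \<Rightarrow> nat \<Rightarrow> bool) \<Rightarrow> (nat \<times> nat) set" where
  "graph_rel n E = {(u, v). u < n \<and> v < n \<and> E u v}"

lemma gdist_graph_rel: "gdist n E a b = (INF l \<in> {l. (a, b) \<in> graph_rel n E ^^ l}. enat l)"
  unfolding gdist_def graph_rel_def ..

lemma gdist_le: "(a, b) \<in> graph_rel n E ^^ l \<Longrightarrow> gdist n E a b \<le> enat l"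
  unfolding gdist_graph_rel by (rule INF_lower) auto

lemma gdist_eq:
  "gdist n E a b = (if \<exists>l. (a, b) \<in> graph_rel n E ^^ l
    then enat (LEAST l. (a, b) \<in> graph_rel n E ^^ l) else \<infinity>)"
proof (cases "\<exists>l. (a, b) \<in> graph_rel n E ^^ l")
  case True
  let ?P = "\<lambda>l. (a, b) \<in> graph_rel n E ^^ l"
  have "gdist n E a b = enat (LEAST l. ?P l)"
  proof (rule antisym)
    show "gdist n E a b \<le> enat (LEAST l. ?P l)"
      unfolding gdist_graph_rel by (rule INF_lower) (simp add: LeastI_ex[OF True])
    show "enat (LEAST l. ?P l) \<le> gdist n E a b"
      unfolding gdist_graph_rel by (rule INF_greatest) (simp add: Least_le)
  qed
  then show ?thesis using True by simp
next
  case False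
  then show ?thesis unfolding gdist_graph_rel by (simp add: top_enat_def)
qed

lemma gdist_enatD:
  assumes "gdist n E a b = enat d"
  shows "(a, b) \<in> graph_rel n E ^^ d"
proof (cases "\<exists>l. (a, b) \<in> graph_rel n E ^^ l")
  case True
  then have "d = (LEAST l. (a, b) \<in> graph_rel n E ^^ l)" using assms gdist_eq[of n E a b] by simp
  then show ?thesis using LeastI_ex[OF True] by simp
next
  case False
  then show ?thesis using assms gdist_eq[of n E a b] by simp
qed

lemma gdist_self: "gdist n E a a = 0"
proof -
  have "gdist n E a a \<le> enat 0" by (rule gdist_le) simp
  then show ?thesis by (metis le_zero_eq zero_enat_def)
qed

lemma relpow_sym:
  assumes "\<And>u v. (u, v) \<in> Rel \<Longrightarrow> (v, u) \<in> Rel"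
  shows "(a, b) \<in> Rel ^^ l \<Longrightarrow> (b, a) \<in> Rel ^^ l"
proof (induction l arbitrary: a b)
  case 0
  then show ?case by simp
next
  case (Suc l)
  then obtain c where c: "(a, c) \<in> Rel ^^ l" "(c, b) \<in> Rel" by auto
  have "(c, a) \<in> Rel ^^ l" using Suc.IH c(1) by blast
  moreover have "(b, c) \<in> Rel" using assms c(2) by blast
  ultimately have "(b, a) \<in> Rel O Rel ^^ l" by blast
  then show ?case using relpow_add[of 1 l Rel] by simp
qed

lemma gdist_sym:
  assumes "symp E"
  shows "gdist n E a b = gdist n E b a"
proof -
  have sym: "\<And>u v. (u, v) \<in> graph_rel n E \<Longrightarrow> (v, u) \<in> graph_rel n E"
    using assms by (auto simp: graph_rel_def symp_def)
  have "{l. (a, b) \<in> graph_rel n E ^^ l} = {l. (b, a) \<in> graph_rel n E ^^ l}"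
    using relpow_sym[OF sym] by blast
  then show ?thesis unfolding gdist_graph_rel by simp
qed

lemma gdist_triangle: "gdist n E a c \<le> gdist n E a b + gdist n E b c"
proof (cases "gdist n E a b = \<infinity> \<or> gdist n E b c = \<infinity>")
  case True
  then show ?thesis by auto
next
  case False
  then obtain d1 d2 where d: "gdist n E a b = enat d1" "gdist n E b c = enat d2"
    by (meson not_infinity_eq)
  have "(a, b) \<in> graph_rel n E ^^ d1" "(b, c) \<in> graph_rel n E ^^ d2"
    using d gdist_enatD by auto
  then have "(a, c) \<in> graph_rel n E ^^ (d1 + d2)" by (auto simp: relpow_add)
  then have "gdist n E a c \<le> enat (d1 + d2)" by (rule gdist_le)
  then show ?thesis using d by simp
qed

lemma qball_subset: "qball n E R s \<subseteq> {..<n}"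
  unfolding qball_def by auto

lemma subset_qball: "R \<inter> {..<n} \<subseteq> qball n E R s"
  unfolding qball_def using gdist_self by force

lemma qball_qball: "qball n E (qball n E R s) t \<subseteq> qball n E R (s + t)"
proof
  fix q assume "q \<in> qball n E (qball n E R s) t"
  then obtain r where r: "r \<in> qball n E R s" "gdist n E r q \<le> t" "q < n" by (auto simp: qball_def)
  then obtain r0 where r0: "r0 \<in> R" "r0 < n" "gdist n E r0 r \<le> s" by (auto simp: qball_def)
  have "gdist n E r0 q \<le> s + t"
    using gdist_triangle[of n E r0 q r] r r0 add_mono order_trans by blast
  then show "q \<in> qball n E R (s + t)" using r r0 by (auto simp: qball_def)
qed

lemma disjoint_qball_if_notin:
  assumes "symp E" "q \<notin> qball n E R s" "q < n"
  shows "R \<inter> qball n E {q} s = {}"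
proof (rule ccontr)
  assume "R \<inter> qball n E {q} s \<noteq> {}"
  then obtain r where r: "r \<in> R" "r < n" "gdist n E q r \<le> s" by (auto simp: qball_def)
  then have "gdist n E r q \<le> s" using gdist_sym[OF assms(1)] by simp
  then show False using assms r by (auto simp: qball_def)
qed

lemma disjoint_qball_complement:
  assumes "symp E"
  shows "R \<inter> qball n E ({..<n} - qball n E R s) s = {}"
proof (rule ccontr)
  assume "R \<inter> qball n E ({..<n} - qball n E R s) s \<noteq> {}"
  then obtain r c where rc: "r \<in> R" "c \<in> {..<n} - qball n E R s" "gdist n E c r \<le> s" "r < n"
    by (auto simp: qball_def)
  then have "gdist n E r c \<le> s" using gdist_sym[OF assms] by simp
  then show False using rc by (auto simp: qball_def)
qed

text \<open>The induction needs bounds on the spread rather than the spread itself: the spread of a group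
  commutator \<open>U P U\<^sup>\<dagger> P\<close> is only bounded by twice that of \<open>U\<close>.\<close>

definition spread_le :: "nat \<Rightarrow> (nat \<Rightarrow> nat \<Rightarrow> bool) \<Rightarrow> complex mat \<Rightarrow> enat \<Rightarrow> bool" where
  "spread_le n E U s \<longleftrightarrow> (\<forall>R X. R \<subseteq> {..<n} \<longrightarrow> supported_on n R X \<longrightarrow>
      supported_on n (qball n E R s) (U * X * mat_adjoint U))"

lemma spread_leD:
  "spread_le n E U s \<Longrightarrow> R \<subseteq> {..<n} \<Longrightarrow> supported_on n R X \<Longrightarrow>
    supported_on n (qball n E R s) (U * X * mat_adjoint U)"
  unfolding spread_le_def by blast

lemma spread_le_spread:
  assumes U: "unitary_mat (2 ^ n) U"
  shows "spread_le n E U (spread n E U)"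
proof -
  let ?P = "\<lambda>s. \<forall>R X. supported_on n R X \<longrightarrow> supported_on n (qball n E R s) (U * X * mat_adjoint U)"
  note u = unitary_matD[OF U]
  have "?P \<infinity>"
  proof (intro allI impI)
    fix R X assume X: "supported_on n R X"
    show "supported_on n (qball n E R \<infinity>) (U * X * mat_adjoint U)"
    proof (cases "R \<inter> {..<n} = {}")
      case False
      then have "qball n E R \<infinity> = {..<n}" by (auto simp: qball_def)
      then show ?thesis using u supported_on_carrier[OF X] by (simp add: supported_on_all)
    next
      case True
      then have "X = X $$ (0, 0) \<cdot>\<^sub>m 1\<^sub>m (2 ^ n)"
        using supported_on_restrict[OF X] by (simp add: supported_on_empty_scalar)
      then have "U * X * mat_adjoint U = U * (X $$ (0, 0) \<cdot>\<^sub>m 1\<^sub>m (2 ^ n)) * mat_adjoint U"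
        by simp
      also have "\<dots> = X $$ (0, 0) \<cdot>\<^sub>m (U * mat_adjoint U)"
        using u by (simp add: mult_smult_distrib[OF u(1) one_carrier_mat] mult_smult_assoc_mat[OF u(1,2)])
      finally show ?thesis using u supported_on_smult[OF supported_on_one] by simp
    qed
  qed
  then have "?P (spread n E U)" unfolding spread_def by (rule LeastI)
  then show ?thesis unfolding spread_le_def by blast
qed

lemma commute_conj_adjoint:
  fixes U X Z :: "complex mat"
  assumes U: "unitary_mat N U" and c: "X \<in> carrier_mat N N" "Z \<in> carrier_mat N N"
    and com: "X * (U * Z * mat_adjoint U) = (U * Z * mat_adjoint U) * X"
  shows "mat_adjoint U * X * U * Z = Z * (mat_adjoint U * X * U)"
proof -
  note u = unitary_matD[OF U]
  note assoc = assoc_mult_mat[of _ N N _ N _ N]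
  have cancel: "mat_adjoint U * (U * W) = W" if "W \<in> carrier_mat N N" for W
    using unitary_mat_cancel_left(1)[OF U that] .
  have "mat_adjoint U * X * U * Z = mat_adjoint U * (X * (U * Z * mat_adjoint U)) * U"
    using u c by (simp add: assoc cancel right_mult_one_mat[of _ N N])
  also have "\<dots> = mat_adjoint U * ((U * Z * mat_adjoint U) * X) * U" by (simp only: com)
  also have "\<dots> = Z * (mat_adjoint U * X * U)"
    using u c by (simp add: assoc cancel)
  finally show ?thesis .
qed

text \<open>Since \<open>E\<close> is symmetric, for a qubit \<open>q\<close> outside \<open>B(R, s)\<close> the operators \<open>U Z\<^sub>q U\<^sup>\<dagger>\<close> and
  \<open>U X\<^sub>q U\<^sup>\<dagger>\<close> are supported away from \<open>R\<close>; so they commute with \<open>X\<close>, and \<open>U\<^sup>\<dagger> X U\<close> commutes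
  with \<open>Z\<^sub>q\<close> and \<open>X\<^sub>q\<close>.\<close>

lemma spread_le_adjoint:
  assumes E: "symp E" and U: "unitary_mat (2 ^ n) U" and s: "spread_le n E U s"
  shows "spread_le n E (mat_adjoint U) s"
  unfolding spread_le_def mat_adjoint_adjoint
proof (intro allI impI)
  fix R X assume X: "supported_on n R X"
  have com: "commutes_with_qubit n q (mat_adjoint U * X * U)" if q: "q < n" "q \<notin> qball n E R s" for q
  proof -
    have "mat_adjoint U * X * U * Y = Y * (mat_adjoint U * X * U)"
      if Y: "supported_on n {q} Y" for Y
    proof (rule commute_conj_adjoint[OF U supported_on_carrier[OF X] supported_on_carrier[OF Y]])
      have "supported_on n (qball n E {q} s) (U * Y * mat_adjoint U)"
        using spread_leD[OF s _ Y] q by auto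
      then show "X * (U * Y * mat_adjoint U) = U * Y * mat_adjoint U * X"
        using supported_on_disjoint_commute[OF X] disjoint_qball_if_notin[OF E q(2,1)] by blast
    qed
    moreover have "supported_on n {q} (pauli_Z n q)" "supported_on n {q} (pauli_X n q)"
      unfolding pauli_Z_def pauli_X_def by (auto intro!: supported_on_pauli_string split: if_splits)
    ultimately show ?thesis unfolding commutes_with_qubit_def by simp
  qed
  show "supported_on n (qball n E R s) (mat_adjoint U * X * U)"
    by (rule supported_on_if_commutes_with_qubits[OF _ com])
      (use unitary_matD[OF U] supported_on_carrier[OF X] in simp_all)
qed

lemma spread_le_mult:
  assumes A: "A \<in> carrier_mat (2 ^ n) (2 ^ n)" and B: "B \<in> carrier_mat (2 ^ n) (2 ^ n)"
    and "spread_le n E A s" "spread_le n E B t"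
  shows "spread_le n E (A * B) (s + t)"
  unfolding spread_le_def
proof (intro allI impI)
  fix R X assume R: "R \<subseteq> {..<n}" and X: "supported_on n R X"
  have "supported_on n (qball n E R t) (B * X * mat_adjoint B)"
    by (rule spread_leD[OF assms(4) R X])
  then have "supported_on n (qball n E (qball n E R t) s) (A * (B * X * mat_adjoint B) * mat_adjoint A)"
    by (rule spread_leD[OF assms(3) qball_subset])
  then have "supported_on n (qball n E R (s + t)) (A * (B * X * mat_adjoint B) * mat_adjoint A)"
    by (rule supported_on_mono) (use qball_qball[of n E R t s] in \<open>simp add: add.commute\<close>)
  moreover have "A * (B * X * mat_adjoint B) * mat_adjoint A = A * B * X * mat_adjoint (A * B)"
    using A B supported_on_carrier[OF X]
    by (simp add: mat_adjoint_mult[OF A B] assoc_mult_mat[of _ "2 ^ n" "2 ^ n" _ "2 ^ n" _ "2 ^ n"])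
  ultimately show "supported_on n (qball n E R (s + t)) (A * B * X * mat_adjoint (A * B))"
    by simp
qed

lemma spread_le_pauli_string: "spread_le n E (pauli_string n p) 0"
  unfolding spread_le_def pauli_string_adjoint
proof (intro allI impI)
  fix R X assume "R \<subseteq> {..<n}" "supported_on n R X"
  then have "supported_on n R (pauli_string n p * X * pauli_string n p)"
    by (simp add: supported_on_pauli_sandwich)
  then show "supported_on n (qball n E R 0) (pauli_string n p * X * pauli_string n p)"
    by (rule supported_on_mono) (use subset_qball[of R n E 0] \<open>R \<subseteq> {..<n}\<close> in blast)
qed

section \<open>Kronecker products\<close>

lemma kron_carrier [simp]:
  assumes "A \<in> carrier_mat a a'" "B \<in> carrier_mat b b'"
  shows "kron A B \<in> carrier_mat (a * b) (a' * b')"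
  using assms by (intro carrier_matI) (auto simp: kron_def)

lemma dim_kron [simp]:
  "dim_row (kron A B) = dim_row A * dim_row B" "dim_col (kron A B) = dim_col A * dim_col B"
  by (simp_all add: kron_def)

lemma index_kron:
  "i < dim_row A * dim_row B \<Longrightarrow> j < dim_col A * dim_col B \<Longrightarrow>
    kron A B $$ (i, j) = A $$ (i mod dim_row A, j mod dim_col A) * B $$ (i div dim_row A, j div dim_col A)"
  by (simp add: kron_def)

lemma mod_div_less:
  assumes "i < a * b"
  shows "i mod a < (a :: nat) \<and> i div a < b"
proof -
  have "0 < a" using assms by (cases a) auto
  then show ?thesis using assms by (simp add: div_less_iff_less_mult mult.commute)
qed

lemma kron_mult:
  fixes A B C D :: "complex mat"
  assumes c: "A \<in> carrier_mat a a" "C \<in> carrier_mat a a" "B \<in> carrier_mat b b" "D \<in> carrier_mat b b"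
  shows "kron A B * kron C D = kron (A * C) (B * D)"
proof (rule eq_matI)
  fix i j assume "i < dim_row (kron (A * C) (B * D))" "j < dim_col (kron (A * C) (B * D))"
  then have ij: "i < a * b" "j < a * b" using c by auto
  have "(kron A B * kron C D) $$ (i, j) = (\<Sum>z<a * b. kron A B $$ (i, z) * kron C D $$ (z, j))"
    by (rule index_mult_mat_sum[of _ "a * b" "a * b" _ "a * b"]) (use c ij in auto)
  also have "\<dots> = (\<Sum>z<a * b. (\<lambda>z1 z2. A $$ (i mod a, z1) * B $$ (i div a, z2) * (C $$ (z1, j mod a) * D $$ (z2, j div a))) (z mod a) (z div a))"
    by (rule sum.cong) (use c ij mod_div_less in \<open>auto simp: index_kron\<close>)
  also have "\<dots> = (\<Sum>z2<b. \<Sum>z1<a. A $$ (i mod a, z1) * B $$ (i div a, z2) * (C $$ (z1, j mod a) * D $$ (z2, j div a)))"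
    by (rule sum_mod_div)
  also have "\<dots> = (\<Sum>z1<a. A $$ (i mod a, z1) * C $$ (z1, j mod a)) * (\<Sum>z2<b. B $$ (i div a, z2) * D $$ (z2, j div a))"
    by (simp add: sum_product sum.swap[of _ "{..<a}"] mult_ac)
  also have "\<dots> = (A * C) $$ (i mod a, j mod a) * (B * D) $$ (i div a, j div a)"
    using mod_div_less[OF ij(1)] mod_div_less[OF ij(2)]
    by (simp only: index_mult_mat_sum[OF c(1) c(2)] index_mult_mat_sum[OF c(3) c(4)])
  also have "\<dots> = kron (A * C) (B * D) $$ (i, j)"
    using c ij by (simp add: index_kron)
  finally show "(kron A B * kron C D) $$ (i, j) = kron (A * C) (B * D) $$ (i, j)" .
qed (use c in auto)

lemma kron_adjoint: "mat_adjoint (kron A B) = kron (mat_adjoint A) (mat_adjoint B)"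
proof (rule eq_matI)
  fix i j
  assume "i < dim_row (kron (mat_adjoint A) (mat_adjoint B))" "j < dim_col (kron (mat_adjoint A) (mat_adjoint B))"
  then have ij: "i < dim_col A * dim_col B" "j < dim_row A * dim_row B" by auto
  show "mat_adjoint (kron A B) $$ (i, j) = kron (mat_adjoint A) (mat_adjoint B) $$ (i, j)"
    using ij mod_div_less[OF ij(1)] mod_div_less[OF ij(2)] by (simp add: index_kron)
qed auto

lemma kron_one: "kron (1\<^sub>m a) (1\<^sub>m b) = (1\<^sub>m (a * b) :: complex mat)"
proof (rule eq_matI)
  fix i j assume "i < dim_row (1\<^sub>m (a * b) :: complex mat)" "j < dim_col (1\<^sub>m (a * b) :: complex mat)"
  then have ij: "i < a * b" "j < a * b" by auto
  have "(i mod a = j mod a \<and> i div a = j div a) \<longleftrightarrow> i = j" by (metis div_mult_mod_eq)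
  then show "kron (1\<^sub>m a) (1\<^sub>m b) $$ (i, j) = (1\<^sub>m (a * b) :: complex mat) $$ (i, j)"
    using ij mod_div_less[OF ij(1)] mod_div_less[OF ij(2)] by (auto simp: index_kron)
qed auto

lemma kron_smult_left: "kron (c \<cdot>\<^sub>m A) B = c \<cdot>\<^sub>m kron A (B :: complex mat)"
  by (rule eq_matI) (auto simp: index_kron dest!: mod_div_less)

lemma kron_smult_right: "kron A (c \<cdot>\<^sub>m B) = c \<cdot>\<^sub>m kron A (B :: complex mat)"
  by (rule eq_matI) (auto simp: index_kron dest!: mod_div_less)

lemma kron_cancel_right:
  assumes c: "A \<in> carrier_mat a a" "C \<in> carrier_mat a a" "B \<in> carrier_mat b b"
    and nz: "B $$ (i0, j0) \<noteq> 0" "i0 < b" "j0 < b"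
    and eq: "kron A B = kron C (B :: complex mat)"
  shows "A = C"
proof (rule eq_matI)
  fix x y assume "x < dim_row C" "y < dim_col C"
  then have xy: "x < a" "y < a" using c by auto
  have "x + a * i0 < a * Suc i0" "a * Suc i0 \<le> a * b"
    using xy nz by (simp, intro mult_le_mono2, simp)
  moreover have "y + a * j0 < a * Suc j0" "a * Suc j0 \<le> a * b"
    using xy nz by (simp, intro mult_le_mono2, simp)
  ultimately have i: "x + a * i0 < a * b" "y + a * j0 < a * b" by linarith+
  have "kron A B $$ (x + a * i0, y + a * j0) = kron C B $$ (x + a * i0, y + a * j0)" using eq by simp
  then have "A $$ (x, y) * B $$ (i0, j0) = C $$ (x, y) * B $$ (i0, j0)"
    using c i xy by (simp add: index_kron)
  then show "A $$ (x, y) = C $$ (x, y)" using nz by simp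
qed (use c in auto)

section \<open>Stabilizer subsystem codes\<close>

locale subsystem_code =
  fixes n k g :: nat and S :: "complex mat set" and V :: "complex mat"
  assumes code: "stabilizer_subsystem_code n k g S V"
begin

abbreviation "N \<equiv> (2 :: nat) ^ n"
abbreviation "M \<equiv> (2 :: nat) ^ (k + g)"

text \<open>Instances of associativity and of the product carrier rule for the two dimensions \<open>N\<close>
  (physical) and \<open>M\<close> (encoded), so that the simplifier can reassociate products involving \<open>V\<close>.\<close>

lemmas assoc_NM =
  assoc_mult_mat[of _ N N _ N _ N] assoc_mult_mat[of _ N N _ N _ M] assoc_mult_mat[of _ N N _ M _ N]
  assoc_mult_mat[of _ N N _ M _ M] assoc_mult_mat[of _ N M _ N _ N] assoc_mult_mat[of _ N M _ N _ M]
  assoc_mult_mat[of _ N M _ M _ N] assoc_mult_mat[of _ N M _ M _ M] assoc_mult_mat[of _ M N _ N _ N]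
  assoc_mult_mat[of _ M N _ N _ M] assoc_mult_mat[of _ M N _ M _ N] assoc_mult_mat[of _ M N _ M _ M]
  assoc_mult_mat[of _ M M _ N _ N] assoc_mult_mat[of _ M M _ N _ M] assoc_mult_mat[of _ M M _ M _ N]
  assoc_mult_mat[of _ M M _ M _ M]
  mult_carrier_mat[of _ N N _ N] mult_carrier_mat[of _ N N _ M] mult_carrier_mat[of _ N M _ N]
  mult_carrier_mat[of _ N M _ M] mult_carrier_mat[of _ M N _ N] mult_carrier_mat[of _ M N _ M]
  mult_carrier_mat[of _ M M _ N] mult_carrier_mat[of _ M M _ M]

lemma stabilizer_group: "stabilizer_group n S"
  and V_carrier: "V \<in> carrier_mat N M"
  and V_isometry: "mat_adjoint V * V = 1\<^sub>m M"
  and code_space_eq_range: "{V *\<^sub>v w | w. w \<in> carrier_vec M} = code_space n S"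
  and encoded_pauli: "P \<in> pauli_group n \<Longrightarrow> P * code_proj V = code_proj V * P \<Longrightarrow>
    \<exists>PL\<in>pauli_group k. \<exists>PJ\<in>pauli_group g. mat_adjoint V * P * V = kron PL PJ"
  using code unfolding stabilizer_subsystem_code_def by auto

lemma stabilizer_carrier: "s \<in> S \<Longrightarrow> s \<in> carrier_mat N N"
  using stabilizer_group pauli_group_carrier unfolding stabilizer_group_def by auto

lemma stabilizer_adjoint: "s \<in> S \<Longrightarrow> mat_adjoint s \<in> S"
  using stabilizer_group unfolding stabilizer_group_def by auto

lemma adjoint_V_carrier: "mat_adjoint V \<in> carrier_mat M N"
  using V_carrier by simp

lemma code_proj_carrier: "code_proj V \<in> carrier_mat N N"
  unfolding code_proj_def using V_carrier by simp

lemma code_proj_adjoint: "mat_adjoint (code_proj V) = code_proj V"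
  unfolding code_proj_def using V_carrier by (simp add: mat_adjoint_mult[of _ N M _ N])

lemma code_proj_mult_V: "code_proj V * V = V"
  unfolding code_proj_def using V_carrier adjoint_V_carrier V_isometry by (simp add: assoc_NM)

lemma V_mult_in_code_space: "w \<in> carrier_vec M \<Longrightarrow> V *\<^sub>v w \<in> code_space n S"
  using code_space_eq_range by blast

lemma stabilizer_mult_V:
  assumes "s \<in> S"
  shows "s * V = V"
proof (rule mat_eq_if_mult_vec_eq[of _ N M])
  fix w :: "complex vec" assume w: "w \<in> carrier_vec M"
  have "(s * V) *\<^sub>v w = s *\<^sub>v (V *\<^sub>v w)"
    using stabilizer_carrier[OF assms] V_carrier w by (rule assoc_mult_mat_vec)
  also have "\<dots> = V *\<^sub>v w"
    using V_mult_in_code_space[OF w] assms unfolding code_space_def by auto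
  finally show "(s * V) *\<^sub>v w = V *\<^sub>v w" .
qed (use stabilizer_carrier[OF assms] V_carrier in auto)

lemma adjoint_V_mult_stabilizer:
  assumes "s \<in> S"
  shows "mat_adjoint V * s = mat_adjoint V"
proof -
  have "mat_adjoint (mat_adjoint s * V) = mat_adjoint V"
    by (simp add: stabilizer_mult_V[OF stabilizer_adjoint[OF assms]])
  then show ?thesis
    using stabilizer_carrier[OF assms] V_carrier by (simp add: mat_adjoint_mult[of _ N N _ M])
qed

lemma code_space_closed:
  assumes P: "P \<in> carrier_mat N N" and com: "\<forall>s\<in>S. s * P = P * s"
    and v: "v \<in> code_space n S"
  shows "P *\<^sub>v v \<in> code_space n S"
  unfolding code_space_def
proof (intro CollectI conjI ballI)
  have cv: "v \<in> carrier_vec N" using v unfolding code_space_def by auto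
  then show "P *\<^sub>v v \<in> carrier_vec N" using P by simp
  fix s assume s: "s \<in> S"
  have "s *\<^sub>v (P *\<^sub>v v) = (P * s) *\<^sub>v v"
    using assoc_mult_mat_vec[OF stabilizer_carrier[OF s] P cv] com s by simp
  also have "\<dots> = P *\<^sub>v v"
    using assoc_mult_mat_vec[OF P stabilizer_carrier[OF s] cv] v s unfolding code_space_def by auto
  finally show "s *\<^sub>v (P *\<^sub>v v) = P *\<^sub>v v" .
qed

lemma code_proj_mult_if_commutes_stabilizers:
  assumes P: "P \<in> carrier_mat N N" and com: "\<forall>s\<in>S. s * P = P * s"
  shows "code_proj V * (P * V) = P * V"
proof (rule mat_eq_if_mult_vec_eq[of _ N M])
  fix w :: "complex vec" assume w: "w \<in> carrier_vec M"
  obtain w' where w': "w' \<in> carrier_vec M" "P *\<^sub>v (V *\<^sub>v w) = V *\<^sub>v w'"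
    using code_space_closed[OF P com V_mult_in_code_space[OF w]] code_space_eq_range by blast
  have "(code_proj V * (P * V)) *\<^sub>v w = code_proj V *\<^sub>v (V *\<^sub>v w')"
    using assoc_mult_mat_vec[OF code_proj_carrier _ w] assoc_mult_mat_vec[OF P V_carrier w] P V_carrier w'
    by simp
  also have "\<dots> = V *\<^sub>v w'"
    using assoc_mult_mat_vec[OF code_proj_carrier V_carrier w'(1)] by (simp add: code_proj_mult_V)
  also have "\<dots> = (P * V) *\<^sub>v w"
    using w' assoc_mult_mat_vec[OF P V_carrier w] by simp
  finally show "(code_proj V * (P * V)) *\<^sub>v w = (P * V) *\<^sub>v w" .
qed (use P V_carrier code_proj_carrier in auto)

text \<open>A hermitian operator commuting with the stabilizers preserves the code space, so
  \<open>P \<Pi> = \<Pi> P \<Pi>\<close>; taking adjoints gives \<open>\<Pi> P = \<Pi> P \<Pi>\<close> as well.\<close>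

lemma commutes_code_proj_if_commutes_stabilizers:
  assumes P: "P \<in> carrier_mat N N" and herm: "mat_adjoint P = P" and com: "\<forall>s\<in>S. s * P = P * s"
  shows "P * code_proj V = code_proj V * P"
proof -
  note cPi = code_proj_carrier
  have PPi: "P * code_proj V = code_proj V * P * code_proj V"
  proof -
    have "P * code_proj V = (P * V) * mat_adjoint V" unfolding code_proj_def using P V_carrier by (simp add: assoc_NM)
    also have "\<dots> = (code_proj V * (P * V)) * mat_adjoint V"
      by (simp add: code_proj_mult_if_commutes_stabilizers[OF P com])
    also have "\<dots> = code_proj V * P * code_proj V" unfolding code_proj_def using P V_carrier by (simp add: assoc_NM)
    finally show ?thesis .
  qed
  have "code_proj V * P = mat_adjoint (P * code_proj V)"
    using P cPi by (simp add: mat_adjoint_mult[of P N N "code_proj V" N] code_proj_adjoint herm)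
  also have "\<dots> = mat_adjoint (code_proj V * P * code_proj V)" by (simp add: PPi)
  also have "\<dots> = code_proj V * P * code_proj V"
    using P cPi by (simp add: mat_adjoint_mult[of _ N N _ N] code_proj_adjoint herm assoc_NM)
  finally show ?thesis using PPi by simp
qed

lemma encoded_mult:
  assumes A: "A \<in> carrier_mat N N" and B: "B \<in> carrier_mat N N"
    and comB: "B * code_proj V = code_proj V * B"
  shows "mat_adjoint V * (A * B) * V = (mat_adjoint V * A * V) * (mat_adjoint V * B * V)"
proof -
  have "B * V = B * (code_proj V * V)" by (simp add: code_proj_mult_V)
  also have "\<dots> = (B * code_proj V) * V" using B code_proj_carrier V_carrier by simp
  also have "\<dots> = (code_proj V * B) * V" by (simp add: comB)
  also have "\<dots> = V * (mat_adjoint V * B * V)"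
    unfolding code_proj_def using B V_carrier by (simp add: assoc_NM)
  finally have BV: "B * V = V * (mat_adjoint V * B * V)" .
  have "mat_adjoint V * (A * B) * V = mat_adjoint V * A * (B * V)"
    using A B V_carrier by (simp add: assoc_NM)
  also have "\<dots> = (mat_adjoint V * A * V) * (mat_adjoint V * B * V)"
    unfolding BV using A B V_carrier by (simp add: assoc_NM)
  finally show ?thesis .
qed

lemma encoded_adjoint:
  assumes A: "A \<in> carrier_mat N N"
  shows "mat_adjoint (mat_adjoint V * A * V) = mat_adjoint V * mat_adjoint A * V"
proof -
  have "mat_adjoint V * A \<in> carrier_mat M N" using A adjoint_V_carrier by simp
  then have "mat_adjoint (mat_adjoint V * A * V) = mat_adjoint V * mat_adjoint (mat_adjoint V * A)"
    by (rule mat_adjoint_mult[OF _ V_carrier])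
  also have "\<dots> = mat_adjoint V * (mat_adjoint A * V)"
    by (simp add: mat_adjoint_mult[OF adjoint_V_carrier A])
  finally show ?thesis using A V_carrier by (simp add: assoc_NM)
qed

lemma encoded_one: "mat_adjoint V * 1\<^sub>m N * V = 1\<^sub>m M"
  using V_carrier V_isometry by simp

lemma code_proj_commute_adjoint:
  "A \<in> carrier_mat N N \<Longrightarrow> A * code_proj V = code_proj V * A \<Longrightarrow>
    mat_adjoint A * code_proj V = code_proj V * mat_adjoint A"
  by (metis code_proj_adjoint code_proj_carrier mat_adjoint_mult)

end

lemma pauli_sign_cases: "pauli_sign n p t = 1 \<or> pauli_sign n p t = -1"
  using pauli_sign_square[of n p t] square_eq_1_iff by blast

lemma pauli_string_commute_smult:
  "pauli_string n p * (c \<cdot>\<^sub>m pauli_string n t) = pauli_sign n p t \<cdot>\<^sub>m ((c \<cdot>\<^sub>m pauli_string n t) * pauli_string n p)"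
  using pauli_string_commute[of n p t]
  by (simp add: mult_smult_distrib[OF pauli_string_carrier pauli_string_carrier]
      mult_smult_assoc_mat[OF pauli_string_carrier pauli_string_carrier] smult_smult_mat mult.commute)

lemma mat_eq_zero_if_eq_uminus:
  assumes "X \<in> carrier_mat a b" "X = (-1) \<cdot>\<^sub>m (X :: complex mat)"
  shows "X = 0\<^sub>m a b"
proof (rule eq_matI)
  fix i j assume "i < dim_row (0\<^sub>m a b :: complex mat)" "j < dim_col (0\<^sub>m a b :: complex mat)"
  then have "X $$ (i, j) = - X $$ (i, j)"
    using assms by (metis carrier_matD index_smult_mat(1) index_zero_mat(2,3) mult_minus1)
  then show "X $$ (i, j) = 0\<^sub>m a b $$ (i, j)"
    using \<open>i < dim_row (0\<^sub>m a b)\<close> \<open>j < dim_col (0\<^sub>m a b)\<close> by simp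
qed (use assms in auto)

context subsystem_code
begin

text \<open>A Pauli string outside the normaliser anticommutes with some stabilizer \<open>s\<close>; since
  \<open>s\<close> acts trivially on the code space, \<open>V\<^sup>\<dagger> P V = V\<^sup>\<dagger> P s V = - V\<^sup>\<dagger> s P V = - V\<^sup>\<dagger> P V\<close>.\<close>

lemma encoded_pauli_string_eq_zero:
  assumes nc: "\<not> pauli_string n p * code_proj V = code_proj V * pauli_string n p"
  shows "mat_adjoint V * pauli_string n p * V = 0\<^sub>m M M"
proof -
  let ?P = "pauli_string n p"
  obtain s where s: "s \<in> S" "s * ?P \<noteq> ?P * s"
    using commutes_code_proj_if_commutes_stabilizers[OF pauli_string_carrier pauli_string_adjoint] nc
    by blast
  obtain c t where ct: "s = c \<cdot>\<^sub>m pauli_string n t"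
    using s(1) stabilizer_group pauli_groupE unfolding stabilizer_group_def by (metis subsetD)
  have cs: "s \<in> carrier_mat N N" by (rule stabilizer_carrier[OF s(1)])
  have Ps: "?P * s = pauli_sign n p t \<cdot>\<^sub>m (s * ?P)"
    unfolding ct by (rule pauli_string_commute_smult)
  then have sign: "pauli_sign n p t = -1"
    using s(2) pauli_sign_cases[of n p t] by auto
  let ?X = "mat_adjoint V * ?P * V"
  have "?X = mat_adjoint V * (?P * s) * V"
    using cs V_carrier by (simp add: assoc_NM stabilizer_mult_V[OF s(1)])
  also have "\<dots> = (-1) \<cdot>\<^sub>m (mat_adjoint V * (s * ?P) * V)"
  proof -
    have "s * ?P \<in> carrier_mat N N" "mat_adjoint V * (s * ?P) \<in> carrier_mat M N"
      using cs adjoint_V_carrier by auto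
    then show ?thesis unfolding Ps sign
      by (simp add: mult_smult_distrib[OF adjoint_V_carrier] mult_smult_assoc_mat[OF _ V_carrier])
  qed
  also have "mat_adjoint V * (s * ?P) * V = (mat_adjoint V * s) * ?P * V"
    using cs V_carrier by (simp add: assoc_NM)
  also have "\<dots> = ?X" by (simp add: adjoint_V_mult_stabilizer[OF s(1)])
  finally show ?thesis
    by (rule mat_eq_zero_if_eq_uminus[rotated]) (use V_carrier adjoint_V_carrier in \<open>simp add: assoc_NM\<close>)
qed

end

section \<open>Pauli expansion\<close>

definition hs_inner :: "nat \<Rightarrow> complex mat \<Rightarrow> complex mat \<Rightarrow> complex" where
  "hs_inner D B X = (\<Sum>i<D. \<Sum>j<D. cnj (B $$ (i, j)) * X $$ (i, j))"

lemma sum_swap_3: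
  "(\<Sum>x\<in>X. \<Sum>y\<in>Y. \<Sum>g\<in>G. f x y g) = (\<Sum>g\<in>G. \<Sum>x\<in>X. \<Sum>y\<in>Y. (f x y g :: complex))"
  by (subst sum.swap) (simp add: sum.swap[of _ Y])

lemma sum_swap_4:
  "(\<Sum>i\<in>I. \<Sum>j\<in>J. \<Sum>y\<in>Y. \<Sum>x\<in>X. f i j y x) =
    (\<Sum>x\<in>X. \<Sum>y\<in>Y. \<Sum>i\<in>I. \<Sum>j\<in>J. (f i j y x :: complex))"
proof -
  have "(\<Sum>i\<in>I. \<Sum>j\<in>J. \<Sum>y\<in>Y. \<Sum>x\<in>X. f i j y x) = (\<Sum>i\<in>I. \<Sum>j\<in>J. \<Sum>x\<in>X. \<Sum>y\<in>Y. f i j y x)"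
    by (rule sum.cong[OF refl], rule sum.cong[OF refl]) (rule sum.swap)
  also have "\<dots> = (\<Sum>i\<in>I. \<Sum>x\<in>X. \<Sum>j\<in>J. \<Sum>y\<in>Y. f i j y x)"
    by (rule sum.cong[OF refl]) (rule sum.swap)
  also have "\<dots> = (\<Sum>x\<in>X. \<Sum>i\<in>I. \<Sum>j\<in>J. \<Sum>y\<in>Y. f i j y x)" by (rule sum.swap)
  also have "\<dots> = (\<Sum>x\<in>X. \<Sum>i\<in>I. \<Sum>y\<in>Y. \<Sum>j\<in>J. f i j y x)"
    by (rule sum.cong[OF refl], rule sum.cong[OF refl]) (rule sum.swap)
  also have "\<dots> = (\<Sum>x\<in>X. \<Sum>y\<in>Y. \<Sum>i\<in>I. \<Sum>j\<in>J. f i j y x)"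
    by (rule sum.cong[OF refl]) (rule sum.swap)
  finally show ?thesis .
qed

lemma hs_inner_pauli_string:
  "hs_inner (2 ^ m) (pauli_string m a) (pauli_string m a') = (\<Prod>q<m. if a q = a' q then 2 else 0)"
proof -
  have "hs_inner (2 ^ m) (pauli_string m a) (pauli_string m a') =
      (\<Sum>x<2 ^ m. \<Sum>y<2 ^ m. \<Prod>q<m.
        cnj (pauli1_entry (a q) (qbit x q) (qbit y q)) * pauli1_entry (a' q) (qbit x q) (qbit y q))"
    unfolding hs_inner_def by (auto simp: index_pauli_string prod.distrib intro!: sum.cong)
  also have "\<dots> = (\<Prod>q<m. if a q = a' q then 2 else 0)"
    by (subst sum_sum_prod_qbits) (simp add: pauli1_entry_orthogonal)
  finally show ?thesis .
qed

lemma hs_inner_pauli_string_self: "hs_inner (2 ^ m) (pauli_string m a) (pauli_string m a) = 2 ^ m"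
  by (simp add: hs_inner_pauli_string)

lemma hs_inner_pauli_string_neq:
  "q < m \<Longrightarrow> a q \<noteq> a' q \<Longrightarrow> hs_inner (2 ^ m) (pauli_string m a) (pauli_string m a') = 0"
  unfolding hs_inner_pauli_string by (rule prod_zero) (auto intro!: bexI[of _ q])

lemma hs_inner_kron:
  assumes c: "A \<in> carrier_mat K K" "A' \<in> carrier_mat K K" "C \<in> carrier_mat G G" "C' \<in> carrier_mat G G"
  shows "hs_inner (K * G) (kron A C) (kron A' C') = hs_inner K A A' * hs_inner G C C'"
proof -
  let ?a = "\<lambda>i1 j1. cnj (A $$ (i1, j1)) * A' $$ (i1, j1)"
  let ?c = "\<lambda>i2 j2. cnj (C $$ (i2, j2)) * C' $$ (i2, j2)"
  have "hs_inner (K * G) (kron A C) (kron A' C') =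
     (\<Sum>i<K * G. \<Sum>j<K * G. ?a (i mod K) (j mod K) * ?c (i div K) (j div K))"
    unfolding hs_inner_def using c by (intro sum.cong refl) (auto simp: index_kron)
  also have "\<dots> = (\<Sum>i<K * G. (\<lambda>i1 i2. \<Sum>j2<G. \<Sum>j1<K. ?a i1 j1 * ?c i2 j2) (i mod K) (i div K))"
    by (rule sum.cong[OF refl]) (rule sum_mod_div[where f = "\<lambda>j1 j2. ?a (_ mod K) j1 * ?c (_ div K) j2"])
  also have "\<dots> = (\<Sum>i2<G. \<Sum>i1<K. \<Sum>j2<G. \<Sum>j1<K. ?a i1 j1 * ?c i2 j2)"
    by (rule sum_mod_div)
  also have "\<dots> = (\<Sum>i2<G. \<Sum>i1<K. (\<Sum>j1<K. ?a i1 j1) * (\<Sum>j2<G. ?c i2 j2))"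
    by (rule sum.cong[OF refl], rule sum.cong[OF refl]) (simp add: sum_product sum.swap[of _ "{..<G}" "{..<K}"])
  also have "\<dots> = (\<Sum>i1<K. \<Sum>i2<G. (\<Sum>j1<K. ?a i1 j1) * (\<Sum>j2<G. ?c i2 j2))"
    by (rule sum.swap)
  also have "\<dots> = (\<Sum>i1<K. \<Sum>j1<K. ?a i1 j1) * (\<Sum>i2<G. \<Sum>j2<G. ?c i2 j2)"
    by (rule sum_product[symmetric])
  finally show ?thesis unfolding hs_inner_def .
qed

lemma hs_inner_smult: "X \<in> carrier_mat D D \<Longrightarrow> hs_inner D B (c \<cdot>\<^sub>m X) = c * hs_inner D B X"
  unfolding hs_inner_def by (simp add: sum_distrib_left mult_ac)

lemma hs_inner_zero: "hs_inner D B (0\<^sub>m D D) = 0"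
  unfolding hs_inner_def by simp

lemma hs_inner_encoded:
  assumes cB: "B \<in> carrier_mat D' D'" and cV: "V \<in> carrier_mat D D'" and cX: "X \<in> carrier_mat D D"
  shows "hs_inner D' B (mat_adjoint V * X * V) =
    (\<Sum>x<D. \<Sum>y<D. X $$ (x, y) * (\<Sum>i<D'. \<Sum>j<D'. cnj (B $$ (i, j)) * (cnj (V $$ (x, i)) * V $$ (y, j))))"
proof -
  have cVa: "mat_adjoint V \<in> carrier_mat D' D" using cV by simp
  have cVX: "mat_adjoint V * X \<in> carrier_mat D' D" using cVa cX by simp
  have e: "(mat_adjoint V * X * V) $$ (i, j) = (\<Sum>y<D. (\<Sum>x<D. cnj (V $$ (x, i)) * X $$ (x, y)) * V $$ (y, j))"
    if "i < D'" "j < D'" for i j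
  proof -
    have "(mat_adjoint V * X * V) $$ (i, j) = (\<Sum>y<D. (mat_adjoint V * X) $$ (i, y) * V $$ (y, j))"
      by (rule index_mult_mat_sum[OF cVX cV that])
    also have "\<dots> = (\<Sum>y<D. (\<Sum>x<D. cnj (V $$ (x, i)) * X $$ (x, y)) * V $$ (y, j))"
    proof (rule sum.cong[OF refl])
      fix y assume y: "y \<in> {..<D}"
      have "(mat_adjoint V * X) $$ (i, y) = (\<Sum>x<D. mat_adjoint V $$ (i, x) * X $$ (x, y))"
        by (rule index_mult_mat_sum[OF cVa cX that(1)]) (use y in auto)
      also have "\<dots> = (\<Sum>x<D. cnj (V $$ (x, i)) * X $$ (x, y))"
        using cV that by (intro sum.cong refl) auto
      finally show "(mat_adjoint V * X) $$ (i, y) * V $$ (y, j) = (\<Sum>x<D. cnj (V $$ (x, i)) * X $$ (x, y)) * V $$ (y, j)"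
        by simp
    qed
    finally show ?thesis .
  qed
  have "hs_inner D' B (mat_adjoint V * X * V) =
     (\<Sum>i<D'. \<Sum>j<D'. \<Sum>y<D. \<Sum>x<D. cnj (B $$ (i, j)) * (cnj (V $$ (x, i)) * X $$ (x, y) * V $$ (y, j)))"
    unfolding hs_inner_def by (intro sum.cong refl) (simp add: e sum_distrib_left sum_distrib_right mult_ac)
  also have "\<dots> = (\<Sum>x<D. \<Sum>y<D. \<Sum>i<D'. \<Sum>j<D'. cnj (B $$ (i, j)) * (cnj (V $$ (x, i)) * X $$ (x, y) * V $$ (y, j)))"
    by (rule sum_swap_4)
  also have "\<dots> = (\<Sum>x<D. \<Sum>y<D. X $$ (x, y) * (\<Sum>i<D'. \<Sum>j<D'. cnj (B $$ (i, j)) * (cnj (V $$ (x, i)) * V $$ (y, j))))"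
    by (simp add: sum_distrib_left mult_ac)
  finally show ?thesis .
qed


definition pauli_choices :: "nat set \<Rightarrow> nat \<Rightarrow> pauli1 set" where
  "pauli_choices C q = (if q \<in> C then UNIV else {PI})"

definition pauli_coeff :: "nat \<Rightarrow> complex mat \<Rightarrow> (nat \<Rightarrow> pauli1) \<Rightarrow> complex" where
  "pauli_coeff n A p = hs_inner (2 ^ n) (pauli_string n p) A / 2 ^ n"

lemma finite_pauli_choices: "finite (pauli_choices C q)"
  by (simp add: pauli_choices_def UNIV_pauli1)

lemma PiE_pauli_choices_outside:
  "p \<in> PiE {..<n} (pauli_choices C) \<Longrightarrow> q < n \<Longrightarrow> q \<notin> C \<Longrightarrow> p q = PI"
  by (auto simp: PiE_def Pi_def pauli_choices_def)

text \<open>Entrywise completeness relation for the Pauli strings supported on \<open>C\<close>.\<close>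

lemma sum_pauli_choices_entries:
  assumes "x < 2 ^ n" "y < 2 ^ n" "x' < 2 ^ n" "y' < 2 ^ n"
  shows "(\<Sum>p\<in>PiE {..<n} (pauli_choices C). cnj (pauli_string n p $$ (x', y')) * pauli_string n p $$ (x, y)) =
    (\<Prod>q<n. if q \<in> C then (if qbit x' q = qbit x q \<and> qbit y' q = qbit y q then 2 else 0)
            else (if qbit x' q = qbit y' q \<and> qbit x q = qbit y q then 1 else 0))"
proof -
  have "(\<Sum>p\<in>PiE {..<n} (pauli_choices C). cnj (pauli_string n p $$ (x', y')) * pauli_string n p $$ (x, y)) =
      (\<Sum>p\<in>PiE {..<n} (pauli_choices C). \<Prod>q<n.
        cnj (pauli1_entry (p q) (qbit x' q) (qbit y' q)) * pauli1_entry (p q) (qbit x q) (qbit y q))"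
    using assms by (simp add: index_pauli_string prod.distrib)
  also have "\<dots> = (\<Prod>q<n. \<Sum>s\<in>pauli_choices C q.
      cnj (pauli1_entry s (qbit x' q) (qbit y' q)) * pauli1_entry s (qbit x q) (qbit y q))"
    by (rule prod_sum_PiE[symmetric]) (auto simp: finite_pauli_choices)
  finally show ?thesis
    by (auto simp: pauli_choices_def pauli1_entry_complete intro!: prod.cong)
qed

lemma pauli_expansion:
  assumes A: "supported_on n C A" and xy: "x < 2 ^ n" "y < 2 ^ n"
  shows "A $$ (x, y) = (\<Sum>p\<in>PiE {..<n} (pauli_choices C). pauli_coeff n A p * pauli_string n p $$ (x, y))"
proof -
  define H where "H q b b' = (if q \<in> C then (if b = qbit x q \<and> b' = qbit y q then 2 else 0)
      else (if b = b' \<and> qbit x q = qbit y q then 1 else 0 :: complex))" for q b b'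
  let ?G = "PiE {..<n} (pauli_choices C)"
  have complete: "(\<Sum>p\<in>?G. cnj (pauli_string n p $$ (x', y')) * pauli_string n p $$ (x, y)) =
      (\<Prod>q<n. H q (qbit x' q) (qbit y' q))" if "x' < 2 ^ n" "y' < 2 ^ n" for x' y'
    unfolding sum_pauli_choices_entries[OF xy that] H_def by (intro prod.cong) auto
  have "(\<Sum>p\<in>?G. pauli_coeff n A p * pauli_string n p $$ (x, y)) =
      (\<Sum>p\<in>?G. \<Sum>x'<2 ^ n. \<Sum>y'<2 ^ n.
        A $$ (x', y') * (cnj (pauli_string n p $$ (x', y')) * pauli_string n p $$ (x, y)) / 2 ^ n)"
    unfolding pauli_coeff_def hs_inner_def
    by (simp add: sum_distrib_left sum_distrib_right sum_divide_distrib mult_ac)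
  also have "\<dots> = (\<Sum>x'<2 ^ n. \<Sum>y'<2 ^ n.
      \<Sum>p\<in>?G. A $$ (x', y') * (cnj (pauli_string n p $$ (x', y')) * pauli_string n p $$ (x, y)) / 2 ^ n)"
    by (rule sum_swap_3[symmetric])
  also have "\<dots> = (\<Sum>x'<2 ^ n. \<Sum>y'<2 ^ n. A $$ (x', y') * (\<Prod>q<n. H q (qbit x' q) (qbit y' q)) / 2 ^ n)"
    by (intro sum.cong refl)
      (simp only: sum_divide_distrib[symmetric] sum_distrib_left[symmetric] complete lessThan_iff)
  also have "\<dots> = (\<Sum>x'<2 ^ n. \<Sum>y'<2 ^ n. A $$ (x, y) * (\<Prod>q<n. H q (qbit x' q) (qbit y' q)) / 2 ^ n)"
  proof (intro sum.cong refl)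
    fix x' y' assume "x' \<in> {..<(2 :: nat) ^ n}" "y' \<in> {..<(2 :: nat) ^ n}"
    then have x'y': "x' < 2 ^ n" "y' < 2 ^ n" by auto
    show "A $$ (x', y') * (\<Prod>q<n. H q (qbit x' q) (qbit y' q)) / 2 ^ n =
        A $$ (x, y) * (\<Prod>q<n. H q (qbit x' q) (qbit y' q)) / 2 ^ n"
    proof (cases "(\<Prod>q<n. H q (qbit x' q) (qbit y' q)) = 0")
      case False
      then have "\<forall>q<n. H q (qbit x' q) (qbit y' q) \<noteq> 0" by auto
      then have "agree_on n C x' x" "agree_on n C y' y" "agree_off n C x y" "agree_off n C x' y'"
        unfolding agree_on_def agree_off_def H_def by (auto split: if_splits)
      then show ?thesis using supported_on_entry[OF A x'y' xy] by simp
    qed simp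
  qed
  also have "\<dots> = A $$ (x, y) * (\<Sum>x'<2 ^ n. \<Sum>y'<2 ^ n. \<Prod>q<n. H q (qbit x' q) (qbit y' q)) / 2 ^ n"
    by (simp add: sum_distrib_left sum_divide_distrib)
  also have "\<dots> = A $$ (x, y) * (\<Prod>q<n. H q False False + H q False True + (H q True False + H q True True)) / 2 ^ n"
    by (simp only: sum_sum_prod_qbits)
  also have "\<dots> = A $$ (x, y)"
  proof (cases "agree_off n C x y")
    case True
    then have "(\<Prod>q<n. H q False False + H q False True + (H q True False + H q True True)) = (\<Prod>q<n. 2)"
      by (intro prod.cong refl) (auto simp: H_def agree_off_def)
    then show ?thesis by simp
  next
    case False
    then show ?thesis using supported_on_entry_zero[OF A xy] by simp
  qed
  finally show ?thesis by simp
qed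

context subsystem_code
begin

lemma M_eq: "M = 2 ^ k * 2 ^ g"
  by (simp add: power_add)

lemma hs_inner_encoded_expansion:
  assumes A: "supported_on n C A" and B: "B \<in> carrier_mat M M"
  shows "hs_inner M B (mat_adjoint V * A * V) =
    (\<Sum>p\<in>PiE {..<n} (pauli_choices C). pauli_coeff n A p * hs_inner M B (mat_adjoint V * pauli_string n p * V))"
proof -
  define \<Omega> where "\<Omega> x y = (\<Sum>i<M. \<Sum>j<M. cnj (B $$ (i, j)) * (cnj (V $$ (x, i)) * V $$ (y, j)))" for x y
  let ?G = "PiE {..<n} (pauli_choices C)"
  have lin: "hs_inner M B (mat_adjoint V * X * V) = (\<Sum>x<N. \<Sum>y<N. X $$ (x, y) * \<Omega> x y)"
    if "X \<in> carrier_mat N N" for X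
    unfolding \<Omega>_def by (rule hs_inner_encoded[OF B V_carrier that])
  have "hs_inner M B (mat_adjoint V * A * V) = (\<Sum>x<N. \<Sum>y<N. A $$ (x, y) * \<Omega> x y)"
    by (rule lin[OF supported_on_carrier[OF A]])
  also have "\<dots> = (\<Sum>x<N. \<Sum>y<N. \<Sum>p\<in>?G. pauli_coeff n A p * (pauli_string n p $$ (x, y) * \<Omega> x y))"
    by (intro sum.cong refl) (simp add: pauli_expansion[OF A] sum_distrib_left sum_distrib_right mult_ac)
  also have "\<dots> = (\<Sum>p\<in>?G. \<Sum>x<N. \<Sum>y<N. pauli_coeff n A p * (pauli_string n p $$ (x, y) * \<Omega> x y))"
    by (rule sum_swap_3)
  also have "\<dots> = (\<Sum>p\<in>?G. pauli_coeff n A p * hs_inner M B (mat_adjoint V * pauli_string n p * V))"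
    by (intro sum.cong refl) (simp add: lin[OF pauli_string_carrier] sum_distrib_left)
  finally show ?thesis .
qed

lemma hs_inner_encoded_pauli_string_eq_zero:
  assumes not_impl: "\<not> (\<exists>d b. pauli_string n p * code_proj V = code_proj V * pauli_string n p \<and>
      mat_adjoint V * pauli_string n p * V = d \<cdot>\<^sub>m kron (pauli_string k a) (pauli_string g b))"
  shows "hs_inner M (kron (pauli_string k a) (pauli_string g b0)) (mat_adjoint V * pauli_string n p * V) = 0"
proof (cases "pauli_string n p * code_proj V = code_proj V * pauli_string n p")
  case True
  obtain PL PJ where PLJ: "PL \<in> pauli_group k" "PJ \<in> pauli_group g"
    "mat_adjoint V * pauli_string n p * V = kron PL PJ"
    using encoded_pauli[OF pauli_string_in_group True] by blast
  obtain c1 a' where c1: "PL = c1 \<cdot>\<^sub>m pauli_string k a'" using PLJ(1) by (rule pauli_groupE)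
  obtain c2 b' where c2: "PJ = c2 \<cdot>\<^sub>m pauli_string g b'" using PLJ(2) by (rule pauli_groupE)
  have eq: "mat_adjoint V * pauli_string n p * V = (c1 * c2) \<cdot>\<^sub>m kron (pauli_string k a') (pauli_string g b')"
    unfolding PLJ(3) c1 c2 by (simp add: kron_smult_left kron_smult_right smult_smult_mat mult.commute)
  have "\<exists>q<k. a' q \<noteq> a q"
  proof (rule ccontr)
    assume "\<not> (\<exists>q<k. a' q \<noteq> a q)"
    then have "pauli_string k a' = pauli_string k a" by (intro pauli_string_cong) auto
    then show False using not_impl eq True by auto
  qed
  then obtain q where q: "q < k" "a' q \<noteq> a q" by blast
  have "kron (pauli_string k a') (pauli_string g b') \<in> carrier_mat M M"
    unfolding M_eq by (rule kron_carrier) auto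
  then show ?thesis
    unfolding eq M_eq using hs_inner_pauli_string_neq[of q k a a'] q
    by (simp add: hs_inner_smult hs_inner_kron)
next
  case False
  then show ?thesis by (simp add: encoded_pauli_string_eq_zero hs_inner_zero)
qed

text \<open>The cleaning operator \<open>A\<close> may be taken to be a Pauli string: expanding \<open>A\<close> in Pauli strings
  supported on \<open>C\<close>, the encoded action of each term is either zero (outside the normaliser) or a
  multiple of some \<open>P\<^sub>L' \<otimes> P\<^sub>J'\<close>; by orthogonality of Pauli strings, the component \<open>P\<^sub>L \<otimes> P\<^sub>J\<close> of
  \<open>V\<^sup>\<dagger> A V\<close> can only come from a string whose logical part is \<open>P\<^sub>L\<close>.\<close>

lemma cleaning_pauli_string:
  assumes A: "supported_on n C A"
    and impl: "mat_adjoint V * A * V = kron (pauli_string k a) PJ" and PJ: "PJ \<in> pauli_group g"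
  obtains p d b where "\<forall>q<n. q \<notin> C \<longrightarrow> p q = PI"
    and "pauli_string n p * code_proj V = code_proj V * pauli_string n p"
    and "mat_adjoint V * pauli_string n p * V = d \<cdot>\<^sub>m kron (pauli_string k a) (pauli_string g b)"
proof (rule ccontr)
  note witness = that
  assume neg: "\<not> thesis"
  obtain c0 b0 where PJ_eq: "PJ = c0 \<cdot>\<^sub>m pauli_string g b0" "c0 \<in> {1, -1, \<i>, -\<i>}"
    using PJ by (rule pauli_groupE)
  let ?B = "kron (pauli_string k a) (pauli_string g b0)"
  have cB: "?B \<in> carrier_mat M M" unfolding M_eq by (rule kron_carrier) auto
  have "hs_inner M ?B (mat_adjoint V * pauli_string n p * V) = 0"
    if p: "p \<in> PiE {..<n} (pauli_choices C)" for p
    using neg witness[of p] PiE_pauli_choices_outside[OF p]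
    by (intro hs_inner_encoded_pauli_string_eq_zero) blast
  then have "hs_inner M ?B (mat_adjoint V * A * V) = 0"
    by (simp add: hs_inner_encoded_expansion[OF A cB])
  moreover have "hs_inner M ?B (mat_adjoint V * A * V) = c0 * (2 ^ k * 2 ^ g)"
    unfolding impl PJ_eq kron_smult_right M_eq
    by (simp add: hs_inner_smult hs_inner_kron hs_inner_pauli_string_self)
  ultimately show False using PJ_eq(2) by auto
qed

end

section \<open>The Clifford hierarchy\<close>

lemma assoc_mult_square:
  "A \<in> carrier_mat D D \<Longrightarrow> B \<in> carrier_mat D D \<Longrightarrow> C \<in> carrier_mat D D \<Longrightarrow>
    (A * B * C :: complex mat) = A * (B * C)"
  by (rule assoc_mult_mat)

lemma mult_smult_square:
  "A \<in> carrier_mat D D \<Longrightarrow> B \<in> carrier_mat D D \<Longrightarrow> A * (c \<cdot>\<^sub>m B) = c \<cdot>\<^sub>m (A * (B :: complex mat))"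
  by (rule mult_smult_distrib)

lemma smult_mult_square:
  "A \<in> carrier_mat D D \<Longrightarrow> B \<in> carrier_mat D D \<Longrightarrow> (c \<cdot>\<^sub>m A) * B = c \<cdot>\<^sub>m (A * (B :: complex mat))"
  by (rule mult_smult_assoc_mat)

lemma group_commutator_smult:
  fixes X P :: "complex mat"
  assumes "X \<in> carrier_mat D D" "P \<in> carrier_mat D D"
  shows "(a \<cdot>\<^sub>m X) * (b \<cdot>\<^sub>m P) * mat_adjoint (a \<cdot>\<^sub>m X) * mat_adjoint (b \<cdot>\<^sub>m P) =
    (a * cnj a * (b * cnj b)) \<cdot>\<^sub>m (X * P * mat_adjoint X * mat_adjoint P)"
  using assms
  by (simp add: mat_adjoint_smult mult_smult_square[of _ D] smult_mult_square[of _ D] smult_smult_mat mult_ac)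

lemma clifford_carrier: "X \<in> clifford k i \<Longrightarrow> X \<in> carrier_mat (2 ^ k) (2 ^ k)"
proof (cases i)
  case (Suc i')
  then show "X \<in> clifford k i \<Longrightarrow> ?thesis" by (cases i') (auto simp: pauli_group_def)
qed auto

lemma clifford_smult: "X \<in> clifford k i \<Longrightarrow> c \<cdot>\<^sub>m X \<in> clifford k i"
proof (induction k i arbitrary: X c rule: clifford.induct)
  case (1 k)
  then obtain c' where "X = c' \<cdot>\<^sub>m 1\<^sub>m (2 ^ k)" by auto
  then show ?case by (auto simp: smult_smult_mat)
next
  case (2 k)
  then obtain c' P where "X = c' \<cdot>\<^sub>m P" "P \<in> pauli_group k" by auto
  then show ?case by (auto simp: smult_smult_mat)
next
  case (3 k j)
  have cX: "X \<in> carrier_mat (2 ^ k) (2 ^ k)" using "3.prems" by simp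
  have "c \<cdot>\<^sub>m X * P * mat_adjoint (c \<cdot>\<^sub>m X) * mat_adjoint P \<in> clifford k (Suc j)"
    if P: "P \<in> clifford k (Suc 0)" for P
  proof -
    have "X * P * mat_adjoint X * mat_adjoint P \<in> clifford k (Suc j)" using "3.prems" P by auto
    then have "(c * cnj c * (1 * cnj 1)) \<cdot>\<^sub>m (X * P * mat_adjoint X * mat_adjoint P) \<in> clifford k (Suc j)"
      using "3.IH"[OF P] by blast
    then show ?thesis
      using group_commutator_smult[OF cX clifford_carrier[OF P], of c 1] by simp
  qed
  then show ?case using cX by simp
qed

text \<open>Conjugating twice by the involution \<open>P\<close> shows \<open>c\<^sup>2 = 1\<close>.\<close>

lemma scalar_group_commutator:
  fixes W P :: "complex mat"
  assumes W: "unitary_mat D W" and cP: "P \<in> carrier_mat D D" and PP1: "P * P = 1\<^sub>m D"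
    and h: "W * P * mat_adjoint W * P = c \<cdot>\<^sub>m 1\<^sub>m D" and D: "0 < D"
  shows "W * P = c \<cdot>\<^sub>m (P * W)" and "c = 1 \<or> c = -1"
proof -
  note S = assoc_mult_square[of _ D] mult_smult_square[of _ D] smult_mult_square[of _ D] smult_smult_mat
  note w = unitary_matD[OF W]
  have cW: "W \<in> carrier_mat D D" and cWa: "mat_adjoint W \<in> carrier_mat D D" using w by auto
  have PPW: "P * (P * W) = W" using PP1 cP cW by (metis assoc_mult_mat left_mult_one_mat)
  have "W * P = W * P * (mat_adjoint W * W)" using cW cP w by simp
  also have "\<dots> = (W * P * mat_adjoint W * P) * (P * W)" using PPW cW cP cWa by (simp add: S)
  also have "\<dots> = c \<cdot>\<^sub>m (P * W)" unfolding h using cW cP by (simp add: S)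
  finally show WP: "W * P = c \<cdot>\<^sub>m (P * W)" .
  have PWP: "P * W * P = c \<cdot>\<^sub>m W"
  proof -
    have "P * W * P = P * (W * P)" using cP cW by simp
    also have "\<dots> = c \<cdot>\<^sub>m (P * (P * W))" unfolding WP using cP cW by (simp add: S)
    finally show ?thesis by (simp add: PPW)
  qed
  have "W = P * (P * W * P) * P"
  proof -
    have "P * (P * W * P) * P = (P * P) * W * (P * P)" using cP cW by (simp add: S)
    then show ?thesis using PP1 cW by simp
  qed
  also have "\<dots> = (c * c) \<cdot>\<^sub>m W"
  proof -
    have "P * (W * P) = c \<cdot>\<^sub>m W" using PWP cP cW by simp
    then show ?thesis unfolding PWP using cP cW by (simp add: S)
  qed
  finally have Wc: "W = (c * c) \<cdot>\<^sub>m W" .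
  obtain i j where ij: "i < D" "j < D" "W $$ (i, j) \<noteq> 0"
    using nonzero_entry_if_right_invertible[OF cW cWa w(3) D] by blast
  have "W $$ (i, j) = ((c * c) \<cdot>\<^sub>m W) $$ (i, j)" using Wc by simp
  then have "W $$ (i, j) = (c * c) * W $$ (i, j)" using ij cW by simp
  then show "c = 1 \<or> c = -1" using ij(3) square_eq_1_iff[of c] by simp
qed

text \<open>If all group commutators of \<open>U\<close> with Pauli strings are scalars \<open>\<plusminus>1\<close>, then \<open>U\<close> commutes
  or anticommutes with every \<open>Z\<^sub>q\<close> and \<open>X\<^sub>q\<close>; the Pauli string \<open>Q\<close> with the same pattern of signs
  makes \<open>U Q\<close> commute with all of them, hence \<open>U Q\<close> is a scalar and \<open>U\<close> a multiple of \<open>Q\<close>.\<close>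

definition pauli_of_signs :: "complex \<Rightarrow> complex \<Rightarrow> pauli1" where
  "pauli_of_signs cz cx = (if cz = -1 then (if cx = -1 then PY else PX) else (if cx = -1 then PZ else PI))"

lemma pauli1_sign_pauli_of_signs:
  "cz = 1 \<or> cz = -1 \<Longrightarrow> pauli1_sign (pauli_of_signs cz cx) PZ = cz"
  "cx = 1 \<or> cx = -1 \<Longrightarrow> pauli1_sign (pauli_of_signs cz cx) PX = cx"
  by (auto simp: pauli1_sign_def pauli_of_signs_def)

lemma commute_mult_if_anticommute:
  fixes U Q Z :: "complex mat"
  assumes c: "U \<in> carrier_mat D D" "Q \<in> carrier_mat D D" "Z \<in> carrier_mat D D"
    and UZ: "U * Z = s \<cdot>\<^sub>m (Z * U)" and QZ: "Q * Z = s \<cdot>\<^sub>m (Z * Q)" and s: "s = 1 \<or> s = -1"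
  shows "U * Q * Z = Z * (U * Q)"
proof -
  note S = assoc_mult_square[of _ D] mult_smult_square[of _ D] smult_mult_square[of _ D] smult_smult_mat
  have "U * Q * Z = s \<cdot>\<^sub>m ((U * Z) * Q)" using c by (simp add: S QZ)
  also have "\<dots> = Z * (U * Q)" unfolding UZ using c s by (auto simp: S)
  finally show ?thesis .
qed

lemma pauli_if_scalar_commutators:
  assumes U: "unitary_mat (2 ^ k) U"
    and h: "\<And>a. \<exists>c. U * pauli_string k a * mat_adjoint U * pauli_string k a = c \<cdot>\<^sub>m 1\<^sub>m (2 ^ k)"
  shows "U \<in> clifford k (Suc 0)"
proof -
  let ?D = "(2 :: nat) ^ k"
  note u = unitary_matD[OF U]
  have rel: "\<exists>c. U * pauli_string k a = c \<cdot>\<^sub>m (pauli_string k a * U) \<and> (c = 1 \<or> c = -1)" for a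
  proof -
    obtain c where c: "U * pauli_string k a * mat_adjoint U * pauli_string k a = c \<cdot>\<^sub>m 1\<^sub>m ?D"
      using h by blast
    have "U * pauli_string k a = c \<cdot>\<^sub>m (pauli_string k a * U)" "c = 1 \<or> c = -1"
      using scalar_group_commutator[OF U pauli_string_carrier pauli_string_square c] by simp_all
    then show ?thesis by blast
  qed
  have "\<forall>q. \<exists>cz cx. q < k \<longrightarrow>
      U * pauli_Z k q = cz \<cdot>\<^sub>m (pauli_Z k q * U) \<and> (cz = 1 \<or> cz = -1) \<and>
      U * pauli_X k q = cx \<cdot>\<^sub>m (pauli_X k q * U) \<and> (cx = 1 \<or> cx = -1)"
    using rel unfolding pauli_Z_def pauli_X_def by blast
  then obtain cz cx where czx: "\<And>q. q < k \<Longrightarrow>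
      U * pauli_Z k q = cz q \<cdot>\<^sub>m (pauli_Z k q * U) \<and> (cz q = 1 \<or> cz q = -1) \<and>
      U * pauli_X k q = cx q \<cdot>\<^sub>m (pauli_X k q * U) \<and> (cx q = 1 \<or> cx q = -1)"
    by metis
  let ?Q = "pauli_string k (\<lambda>q. pauli_of_signs (cz q) (cx q))"
  have "supported_on k {} (U * ?Q)"
  proof (rule supported_on_if_commutes_with_qubits)
    fix q assume q: "q < k" "q \<notin> {}"
    note signs = czx[OF q(1)]
    have QZ: "?Q * pauli_Z k q = cz q \<cdot>\<^sub>m (pauli_Z k q * ?Q)"
      and QX: "?Q * pauli_X k q = cx q \<cdot>\<^sub>m (pauli_X k q * ?Q)"
      unfolding pauli_Z_def pauli_X_def
      using signs pauli_string_commute[of k "\<lambda>q. pauli_of_signs (cz q) (cx q)"]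
      by (simp_all add: pauli_sign_single[OF q(1)] pauli1_sign_pauli_of_signs)
    have "U * ?Q * pauli_Z k q = pauli_Z k q * (U * ?Q)"
      by (rule commute_mult_if_anticommute[OF u(1) pauli_string_carrier pauli_ZX_carrier(1) _ QZ])
        (use signs in auto)
    moreover have "U * ?Q * pauli_X k q = pauli_X k q * (U * ?Q)"
      by (rule commute_mult_if_anticommute[OF u(1) pauli_string_carrier pauli_ZX_carrier(2) _ QX])
        (use signs in auto)
    ultimately show "commutes_with_qubit k q (U * ?Q)"
      unfolding commutes_with_qubit_def by blast
  qed (use u in simp)
  then have scalar: "U * ?Q = (U * ?Q) $$ (0, 0) \<cdot>\<^sub>m 1\<^sub>m ?D" by (rule supported_on_empty_scalar)
  have "U = (U * ?Q) * ?Q" using u by (simp add: assoc_mult_square[of _ ?D] pauli_string_square)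
  also have "\<dots> = (U * ?Q) $$ (0, 0) \<cdot>\<^sub>m ?Q" by (subst scalar) (simp add: smult_mult_square[of _ ?D])
  finally show ?thesis using pauli_string_in_group by auto
qed

lemma clifford_Suc_if_commutators:
  assumes U: "unitary_mat (2 ^ k) U"
    and comm: "\<And>a. U * pauli_string k a * mat_adjoint U * pauli_string k a \<in> clifford k m"
  shows "U \<in> clifford k (Suc m)"
proof (cases m)
  case 0
  show ?thesis unfolding 0 by (rule pauli_if_scalar_commutators[OF U]) (use comm 0 in auto)
next
  case (Suc j)
  have "U * P * mat_adjoint U * mat_adjoint P \<in> clifford k m" if P: "P \<in> clifford k (Suc 0)" for P
  proof -
    obtain e P0 where P0: "P = e \<cdot>\<^sub>m P0" "P0 \<in> pauli_group k" using P by auto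
    obtain c p where "P0 = c \<cdot>\<^sub>m pauli_string k p" using P0(2) by (rule pauli_groupE)
    then have P: "P = e \<cdot>\<^sub>m (c \<cdot>\<^sub>m pauli_string k p)" using P0(1) by simp
    have "(1 * cnj 1 * (e * c * cnj (e * c))) \<cdot>\<^sub>m (U * pauli_string k p * mat_adjoint U * pauli_string k p)
        \<in> clifford k m"
      using comm by (rule clifford_smult)
    then show ?thesis
      unfolding P smult_smult_mat
      using group_commutator_smult[OF unitary_matD(1)[OF U] pauli_string_carrier, of 1 "e * c" p]
      by (simp add: pauli_string_adjoint)
  qed
  then show ?thesis using Suc unitary_matD(1)[OF U] by simp
qed

section \<open>Logical action of bare codespace-preserving unitaries\<close>

lemma mult_smult_smult_square:
  fixes A B C B' :: "complex mat"
  assumes "A \<in> carrier_mat D D" "B \<in> carrier_mat D D" "C \<in> carrier_mat D D" "B' \<in> carrier_mat D D"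
  shows "A * (d \<cdot>\<^sub>m B) * C * (d \<cdot>\<^sub>m B') = (d * d) \<cdot>\<^sub>m (A * B * C * B')"
  using assms
  by (simp add: assoc_mult_square[of _ D] mult_smult_square[of _ D] smult_mult_square[of _ D] smult_smult_mat)

context subsystem_code
begin

definition bare_unitary :: "complex mat \<Rightarrow> complex mat \<Rightarrow> bool" where
  "bare_unitary U UL \<longleftrightarrow> unitary_mat N U \<and> U * code_proj V = code_proj V * U \<and>
     implements k g V U UL (1\<^sub>m (2 ^ g))"

lemma bare_unitaryD:
  assumes "bare_unitary U UL"
  shows "unitary_mat N U" "U \<in> carrier_mat N N" "U * code_proj V = code_proj V * U"
    and "mat_adjoint V * U * V = kron UL (1\<^sub>m (2 ^ g))" "UL \<in> carrier_mat (2 ^ k) (2 ^ k)"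
  using assms unitary_matD(1) unfolding bare_unitary_def implements_def by auto

lemma kron_one_M: "kron (1\<^sub>m (2 ^ k)) (1\<^sub>m (2 ^ g)) = 1\<^sub>m M"
  by (simp add: kron_one power_add)

lemma kron_cancel_one:
  "A \<in> carrier_mat (2 ^ k) (2 ^ k) \<Longrightarrow> kron A (1\<^sub>m (2 ^ g)) = kron (1\<^sub>m (2 ^ k)) (1\<^sub>m (2 ^ g)) \<Longrightarrow>
    A = 1\<^sub>m (2 ^ k)"
  by (rule kron_cancel_right[of _ "2 ^ k" _ _ "2 ^ g" 0 0]) auto

lemma logical_unitary:
  assumes U: "bare_unitary U UL"
  shows "unitary_mat (2 ^ k) UL"
proof -
  note u = bare_unitaryD[OF U] and uu = unitary_matD[OF u(1)]
  have adj: "mat_adjoint V * mat_adjoint U * V = kron (mat_adjoint UL) (1\<^sub>m (2 ^ g))"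
    using encoded_adjoint[OF u(2)] u(4) by (simp add: kron_adjoint)
  have "kron (UL * mat_adjoint UL) (1\<^sub>m (2 ^ g)) = mat_adjoint V * (U * mat_adjoint U) * V"
    using encoded_mult[OF u(2) uu(2) code_proj_commute_adjoint[OF u(2,3)]] u(4,5) adj
    by (simp add: kron_mult[of _ "2 ^ k" _ _ "2 ^ g"])
  also have "\<dots> = kron (1\<^sub>m (2 ^ k)) (1\<^sub>m (2 ^ g))" using uu(3) encoded_one kron_one_M by simp
  finally have 1: "UL * mat_adjoint UL = 1\<^sub>m (2 ^ k)" by (rule kron_cancel_one[rotated]) (use u(5) in simp)
  have "kron (mat_adjoint UL * UL) (1\<^sub>m (2 ^ g)) = mat_adjoint V * (mat_adjoint U * U) * V"
    using encoded_mult[OF uu(2) u(2) u(3)] u(4,5) adj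
    by (simp add: kron_mult[of _ "2 ^ k" _ _ "2 ^ g"])
  also have "\<dots> = kron (1\<^sub>m (2 ^ k)) (1\<^sub>m (2 ^ g))" using uu(4) encoded_one kron_one_M by simp
  finally have 2: "mat_adjoint UL * UL = 1\<^sub>m (2 ^ k)" by (rule kron_cancel_one[rotated]) (use u(5) in simp)
  show ?thesis using 1 2 u(5) unfolding unitary_mat_def by simp
qed

lemma logical_commute:
  assumes U: "bare_unitary U UL"
    and A: "A \<in> carrier_mat N N" "A * code_proj V = code_proj V * A"
    and impl: "implements k g V A PL PJ" and PJ: "PJ \<in> pauli_group g" and UA: "U * A = A * U"
  shows "UL * PL = PL * UL"
proof -
  note u = bare_unitaryD[OF U]
  have AL: "PL \<in> carrier_mat (2 ^ k) (2 ^ k)" "mat_adjoint V * A * V = kron PL PJ"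
    using impl unfolding implements_def by auto
  have cPJ: "PJ \<in> carrier_mat (2 ^ g) (2 ^ g)" by (rule pauli_group_carrier[OF PJ])
  have "kron (UL * PL) PJ = mat_adjoint V * (U * A) * V"
    using encoded_mult[OF u(2) A] u(4,5) AL cPJ by (simp add: kron_mult[of _ "2 ^ k" _ _ "2 ^ g"])
  also have "\<dots> = kron (PL * UL) PJ"
    unfolding UA using encoded_mult[OF A(1) u(2,3)] u(4,5) AL cPJ by (simp add: kron_mult[of _ "2 ^ k" _ _ "2 ^ g"])
  finally have eq: "kron (UL * PL) PJ = kron (PL * UL) PJ" .
  obtain i j where ij: "i < 2 ^ g" "j < 2 ^ g" "PJ $$ (i, j) \<noteq> 0"
    using pauli_group_nonzero_entry[OF PJ] by blast
  show ?thesis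
    by (rule kron_cancel_right[OF _ _ cPJ ij(3,1,2) eq]) (use u(5) AL(1) in auto)
qed

lemma logical_scalar_if_cleanable:
  assumes U: "bare_unitary U UL" and supp: "supported_on n R U" and clean: "dressed_cleanable n k g V R"
  shows "UL \<in> clifford k 0"
proof -
  have comm: "UL * PL = PL * UL" if PL: "PL \<in> pauli_group k" for PL
  proof -
    obtain A PJ where A: "PJ \<in> pauli_group g" "supported_on n ({..<n} - R) A" "dressed_CSP n k g V A"
      "implements k g V A PL PJ"
      using clean PL unfolding dressed_cleanable_def by blast
    have "U * A = A * U" by (rule supported_on_disjoint_commute[OF supp A(2)]) auto
    then show ?thesis
      using logical_commute[OF U _ _ A(4,1)] A(3) unfolding dressed_CSP_def CSP_def by blast
  qed
  have "supported_on k {} UL"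
  proof (rule supported_on_if_commutes_with_qubits)
    fix q assume "q < k" "q \<notin> {}"
    show "commutes_with_qubit k q UL"
      unfolding commutes_with_qubit_def using comm pauli_ZX_in_group by simp
  qed (rule bare_unitaryD(5)[OF U])
  then have "UL = UL $$ (0, 0) \<cdot>\<^sub>m 1\<^sub>m (2 ^ k)" by (rule supported_on_empty_scalar)
  then show ?thesis by auto
qed

lemma encoded_pauli_scalar_square:
  assumes P: "pauli_string n p * code_proj V = code_proj V * pauli_string n p"
    and PL: "mat_adjoint V * pauli_string n p * V = d \<cdot>\<^sub>m kron (pauli_string k a) (pauli_string g b)"
  shows "d * d = 1"
proof -
  let ?D = "kron (pauli_string k a) (pauli_string g b)"
  have cD: "?D \<in> carrier_mat M M" unfolding M_eq by (rule kron_carrier) auto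
  have DD: "?D * ?D = 1\<^sub>m M"
    by (simp add: kron_mult[of _ "2 ^ k" _ _ "2 ^ g"] pauli_string_square kron_one_M)
  have "1\<^sub>m M = mat_adjoint V * (pauli_string n p * pauli_string n p) * V"
    using encoded_one by (simp add: pauli_string_square)
  also have "\<dots> = (d * d) \<cdot>\<^sub>m 1\<^sub>m M"
    unfolding encoded_mult[OF pauli_string_carrier pauli_string_carrier P] PL
    using cD by (simp add: mult_smult_square[of _ M] smult_mult_square[of _ M] smult_smult_mat DD)
  finally have "(1\<^sub>m M :: complex mat) $$ (0, 0) = ((d * d) \<cdot>\<^sub>m 1\<^sub>m M) $$ (0, 0)" by simp
  then show ?thesis by simp
qed

lemma bare_unitary_group_commutator:
  assumes U: "bare_unitary U UL"
    and P: "pauli_string n p * code_proj V = code_proj V * pauli_string n p"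
    and PL: "mat_adjoint V * pauli_string n p * V = d \<cdot>\<^sub>m kron (pauli_string k a) (pauli_string g b)"
  shows "bare_unitary (U * pauli_string n p * mat_adjoint U * pauli_string n p)
    (UL * pauli_string k a * mat_adjoint UL * pauli_string k a)"
proof -
  let ?P = "pauli_string n p" and ?D = "kron (pauli_string k a) (pauli_string g b)"
  note u = bare_unitaryD[OF U] and uu = unitary_matD[OF u(1)]
  have comUa: "mat_adjoint U * code_proj V = code_proj V * mat_adjoint U"
    by (rule code_proj_commute_adjoint[OF u(2,3)])
  have unitary: "unitary_mat N (U * ?P * mat_adjoint U * ?P)"
    by (intro unitary_mat_mult unitary_mat_adjoint u(1) unitary_pauli_string)
  have c1: "U * ?P * code_proj V = code_proj V * (U * ?P)"
    by (rule commute_mult[OF u(2) pauli_string_carrier code_proj_carrier u(3) P])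
  have c2: "U * ?P * mat_adjoint U * code_proj V = code_proj V * (U * ?P * mat_adjoint U)"
    by (rule commute_mult[OF _ uu(2) code_proj_carrier c1 comUa]) (use u(2) in simp)
  have csp: "U * ?P * mat_adjoint U * ?P * code_proj V = code_proj V * (U * ?P * mat_adjoint U * ?P)"
    by (rule commute_mult[OF _ pauli_string_carrier code_proj_carrier c2 P]) (use u(2) uu(2) in simp)
  have cD: "?D \<in> carrier_mat M M" unfolding M_eq by (rule kron_carrier) auto
  have adj: "mat_adjoint V * mat_adjoint U * V = kron (mat_adjoint UL) (1\<^sub>m (2 ^ g))"
    using encoded_adjoint[OF u(2)] u(4) by (simp add: kron_adjoint)
  have "mat_adjoint V * (U * ?P * mat_adjoint U * ?P) * V =
      kron UL (1\<^sub>m (2 ^ g)) * (d \<cdot>\<^sub>m ?D) * kron (mat_adjoint UL) (1\<^sub>m (2 ^ g)) * (d \<cdot>\<^sub>m ?D)"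
    using u(2) uu(2)
    by (simp add: encoded_mult[OF _ pauli_string_carrier P] encoded_mult[OF _ uu(2) comUa]
        encoded_mult[OF u(2) pauli_string_carrier P] adj u(4) PL)
  also have "\<dots> = (d * d) \<cdot>\<^sub>m (kron UL (1\<^sub>m (2 ^ g)) * ?D * kron (mat_adjoint UL) (1\<^sub>m (2 ^ g)) * ?D)"
    by (rule mult_smult_smult_square) (use u(5) cD in \<open>auto simp: M_eq\<close>)
  also have "\<dots> = kron (UL * pauli_string k a * mat_adjoint UL * pauli_string k a) (1\<^sub>m (2 ^ g))"
    using u(5) encoded_pauli_scalar_square[OF P PL]
    by (simp add: kron_mult[of _ "2 ^ k" _ _ "2 ^ g"] pauli_string_square)
  finally show ?thesis
    using unitary csp u(5) unfolding bare_unitary_def implements_def by simp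
qed

end

text \<open>The group commutator \<open>K = U P U\<^sup>\<dagger> P\<close> is supported where \<open>U\<close> is (as \<open>U (P U\<^sup>\<dagger> P)\<close>) and
  within \<open>B(C, s)\<close> (as \<open>(U P U\<^sup>\<dagger>) P\<close>), and its spread is at most twice that of \<open>U\<close>.\<close>

lemma group_commutator_supported_on:
  assumes U: "supported_on n D U" and s: "spread_le n E U s"
    and C: "C \<subseteq> {..<n}" "supported_on n C (pauli_string n p)"
  shows "supported_on n (D \<inter> qball n E C s) (U * pauli_string n p * mat_adjoint U * pauli_string n p)"
proof (rule supported_on_Int)
  let ?P = "pauli_string n p"
  have cU: "U \<in> carrier_mat (2 ^ n) (2 ^ n)" by (rule supported_on_carrier[OF U])
  have "supported_on n D (U * (?P * mat_adjoint U * ?P))"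
    by (intro supported_on_mult U supported_on_pauli_sandwich supported_on_adjoint)
  then show "supported_on n D (U * ?P * mat_adjoint U * ?P)"
    using cU by (simp add: assoc_mult_square[of _ "2 ^ n"])
  have P: "supported_on n (qball n E C s) ?P"
    by (rule supported_on_mono[OF C(2)]) (use subset_qball[of C n E s] C(1) in auto)
  show "supported_on n (qball n E C s) (U * ?P * mat_adjoint U * ?P)"
    by (rule supported_on_mult[OF spread_leD[OF s C] P])
qed

lemma group_commutator_spread_le:
  assumes E: "symp E" and U: "unitary_mat (2 ^ n) U" and s: "spread_le n E U s"
  shows "spread_le n E (U * pauli_string n p * mat_adjoint U * pauli_string n p) (s + s)"
proof -
  note u = unitary_matD[OF U]
  have "spread_le n E (U * pauli_string n p * mat_adjoint U * pauli_string n p) (((s + 0) + s) + 0)"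
    using u by (intro spread_le_mult s spread_le_pauli_string spread_le_adjoint[OF E U]) simp_all
  then show ?thesis by simp
qed

lemma UN_Int_subset_drop_one:
  assumes "R 1 \<inter> X = {}"
  shows "(\<Union>j\<in>{0..Suc m}. R j) \<inter> X \<subseteq> (\<Union>j\<in>{0..m}. if j = 0 then R 0 else R (Suc j))"
proof
  fix x assume x: "x \<in> (\<Union>j\<in>{0..Suc m}. R j) \<inter> X"
  then obtain j where j: "j \<le> Suc m" "x \<in> R j" by auto
  then have "j \<noteq> 1" using assms x by auto
  then show "x \<in> (\<Union>j\<in>{0..m}. if j = 0 then R 0 else R (Suc j))"
  proof (cases j)
    case 0
    then show ?thesis using j by (intro UN_I[of 0]) auto
  next
    case (Suc j')
    then show ?thesis using j \<open>j \<noteq> 1\<close> by (intro UN_I[of j']) auto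
  qed
qed

context subsystem_code
begin

lemma group_commutator_step:
  assumes E: "symp E" and U: "bare_unitary U UL" and supp: "supported_on n (\<Union>j\<in>{0..Suc m}. R j) U"
    and s: "spread_le n E U s" and clean: "dressed_cleanable n k g V (qball n E (R 1) s)"
  obtains K where "bare_unitary K (UL * pauli_string k a * mat_adjoint UL * pauli_string k a)"
    and "supported_on n (\<Union>j\<in>{0..m}. if j = 0 then R 0 else R (Suc j)) K"
    and "spread_le n E K (s + s)"
proof -
  define C where "C = {..<n} - qball n E (R 1) s"
  obtain A PJ where A: "PJ \<in> pauli_group g" "supported_on n C A" "implements k g V A (pauli_string k a) PJ"
    using clean pauli_string_in_group[of k a] unfolding dressed_cleanable_def C_def by blast
  have impl: "mat_adjoint V * A * V = kron (pauli_string k a) PJ"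
    using A(3) unfolding implements_def by simp
  obtain p d b where p: "\<forall>q<n. q \<notin> C \<longrightarrow> p q = PI"
    "pauli_string n p * code_proj V = code_proj V * pauli_string n p"
    "mat_adjoint V * pauli_string n p * V = d \<cdot>\<^sub>m kron (pauli_string k a) (pauli_string g b)"
    by (rule cleaning_pauli_string[OF A(2) impl A(1)])
  have "supported_on n C (pauli_string n p)"
    by (rule supported_on_pauli_string) (use p(1) in simp)
  then have supp_K: "supported_on n ((\<Union>j\<in>{0..Suc m}. R j) \<inter> qball n E C s)
      (U * pauli_string n p * mat_adjoint U * pauli_string n p)"
    by (rule group_commutator_supported_on[OF supp s, rotated]) (simp add: C_def)
  have "R 1 \<inter> qball n E C s = {}"
    unfolding C_def by (rule disjoint_qball_complement[OF E])
  then have "(\<Union>j\<in>{0..Suc m}. R j) \<inter> qball n E C s \<subseteq> (\<Union>j\<in>{0..m}. if j = 0 then R 0 else R (Suc j))"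
    by (rule UN_Int_subset_drop_one)
  with supp_K have "supported_on n (\<Union>j\<in>{0..m}. if j = 0 then R 0 else R (Suc j))
      (U * pauli_string n p * mat_adjoint U * pauli_string n p)"
    by (rule supported_on_mono)
  then show ?thesis
    by (rule that[OF bare_unitary_group_commutator[OF U p(2,3)] _
          group_commutator_spread_le[OF E bare_unitaryD(1)[OF U] s]])
qed

lemma logical_clifford_level:
  assumes E: "symp E"
  shows "bare_unitary U UL \<Longrightarrow> supported_on n (\<Union>j\<in>{0..m}. R j) U \<Longrightarrow> spread_le n E U s \<Longrightarrow> dressed_cleanable n k g V (R 0) \<Longrightarrow>
    \<forall>j\<in>{1..m}. dressed_cleanable n k g V (qball n E (R j) (2 ^ (j - 1) * s)) \<Longrightarrow>
    UL \<in> clifford k m"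
proof (induction m arbitrary: U UL R s)
  case 0
  then show ?case using logical_scalar_if_cleanable by simp
next
  case (Suc m)
  define R' where "R' j = (if j = 0 then R 0 else R (Suc j))" for j
  have "(1 :: nat) \<in> {1..Suc m}" by simp
  then have "dressed_cleanable n k g V (qball n E (R 1) (2 ^ (1 - 1) * s))"
    using Suc.prems(5) by blast
  then have clean1: "dressed_cleanable n k g V (qball n E (R 1) s)" by simp
  have "UL * pauli_string k a * mat_adjoint UL * pauli_string k a \<in> clifford k m" for a
  proof -
    obtain K where K: "bare_unitary K (UL * pauli_string k a * mat_adjoint UL * pauli_string k a)"
      "supported_on n (\<Union>j\<in>{0..m}. R' j) K" "spread_le n E K (s + s)"
      using group_commutator_step[OF E Suc.prems(1-3) clean1] unfolding R'_def by blast
    have cleanj: "\<forall>j\<in>{1..m}. dressed_cleanable n k g V (qball n E (R' j) (2 ^ (j - 1) * (s + s)))"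
    proof
      fix j assume j: "j \<in> {1..m}"
      then have "Suc j \<in> {1..Suc m}" by auto
      then have "dressed_cleanable n k g V (qball n E (R (Suc j)) (2 ^ (Suc j - 1) * s))"
        using Suc.prems(5) by blast
      moreover have "2 ^ (j - 1) * (s + s) = 2 ^ (Suc j - 1) * s"
        using j by (cases j) (auto simp: mult_2[symmetric] mult_ac)
      ultimately show "dressed_cleanable n k g V (qball n E (R' j) (2 ^ (j - 1) * (s + s)))"
        using j by (simp add: R'_def)
    qed
    have clean0: "dressed_cleanable n k g V (R' 0)"
      using Suc.prems(4) by (simp add: R'_def)
    show ?thesis by (rule Suc.IH[OF K(1) K(2,3) clean0 cleanj])
  qed
  then show ?case
    by (rule clifford_Suc_if_commutators[OF logical_unitary[OF Suc.prems(1)]])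
qed

end

theorem lemma8:
  fixes n k g m :: nat and E :: "nat \<Rightarrow> nat \<Rightarrow> bool"
    and S :: "complex mat set" and V U UL :: "complex mat" and R :: "nat \<Rightarrow> nat set"
  assumes code: "stabilizer_subsystem_code n k g S V"
    and graph: "symp E"
    and regions: "\<forall>j\<le>m. R j \<subseteq> {..<n}"
    and unitary: "U \<in> carrier_mat (2 ^ n) (2 ^ n)" "U * mat_adjoint U = 1\<^sub>m (2 ^ n)"
                 "mat_adjoint U * U = 1\<^sub>m (2 ^ n)"
    and bare: "bare_CSP n k g V U"
    and impl: "implements k g V U UL (1\<^sub>m (2 ^ g))"
    and supp: "supported_on n (\<Union>j\<in>{0..m}. R j) U"
    and clean0: "dressed_cleanable n k g V (R 0)"
    and cleanj: "\<forall>j\<in>{1..m}. dressed_cleanable n k g V (qball n E (R j) (2 ^ (j - 1) * spread n E U))"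
  shows "UL \<in> clifford k m"
proof -
  interpret subsystem_code n k g S V by (rule subsystem_code.intro[OF code])
  have U: "unitary_mat (2 ^ n) U" using unitary unfolding unitary_mat_def by blast
  have "bare_unitary U UL"
    using U bare impl unfolding bare_unitary_def bare_CSP_def CSP_def by blast
  then show ?thesis
    by (rule logical_clifford_level[OF graph _ supp spread_le_spread[OF U] clean0 cleanj])
qed

end
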